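(* In the setting of problem (CP1) and the prox-ADC method described in the context, suppose Assumptions 1–6 hold and let $\{x^k\}$ be generated by the method. (a) If a subsequence $\{x^{k+1}\}_{k\in N}$ ($N\subset\mathbb{N}$ infinite) converges to some $\bar x$ and $\partial^\infty_Af_p(\bar x)=\{0\}$ for $p\in I_2$, then $\{Y^k(x^{k+1})\}_{k\in N}$ is equi-bounded (all contained in one bounded set). (b) If $\{x^k\}$ is bounded and $\partial_A^\infty f_p(x)=\{0\}$ for every $x\in\bigcap_{p=1}^m\operatorname{dom}F_p$ and every $p\in I_2$, then $\{Y^k(x^{k+1})\}$ is equi-bounded, i.e. $D:=\sup_{k\in\mathbb{N}}\sup_{y\in Y^k(x^{k+1})}\|y\|<+\infty$.
   Context: Problem (CP1): integers $0\le m_1\le m$; $f_p:\mathbb{R}^n\to\mathbb{R}$; $\varphi_p:\mathbb{R}\to\mathbb{R}$ convex for $p\le m_1$; $\varphi_p=\delta_{(-\infty,0]}$ for $p>m_1$; $F_p=\varphi_p\circ f_p$. $I_1=\{p:\varphi_p$ nondecreasing$\}$, $I_2$ its complement. Monotonic decomposition $\varphi_p=\varphi^\uparrow_p+\varphi^\downarrow_p$: $(\varphi_p,0)$ if nondecreasing; $(0,\varphi_p)$ if nonincreasing; otherwise with minimizer $z^*$, $\varphi_p^\uparrow=\varphi_p(z^* )$ on $z\le z^*$, $\varphi_p$ on $z>z^*$; $\varphi^\downarrow_p=\varphi_p-\varphi_p(z^* )$ on $z\le z^*$, $0$ on $z>z^*$. Assumption 1: $f_p^k=g_p^k-h_p^k$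 ($g_p^k,h_p^k:\mathbb{R}^n\to\mathbb{R}$ convex), $f_p^k$ epi-converges to $f_p$; $-\infty<\liminf_{x'\to x,k\to\infty}f_p^k(x')\le\limsup_{x'\to x,k\to\infty}f_p^k(x')<\infty$ $\forall x$; $\varphi_p\circ f_p^k$ epi-converges to $\varphi_p\circ f_p$. Assumption 2: $X^k=\{x:f_p^k(x)\le0,p>m_1\}$, $\alpha_p^k=\sup_{X^k}[f_p^{k+1}-f^k_p]_+$; there are $x^0$, nonnegative $\widehat\alpha_p^k\ge\alpha_p^k$ ($p>m_1$) with $\sum_{k'}\widehat\alpha_p^{k'}<\infty$, $f_p^0(x^0)\le-\sum_{k'}\widehat\alpha_p^{k'}$; $\widehat\alpha_p^k=0$ for $p\le m_1$. Assumption 3: $\exists\ell_k>0$: $\min\{\mathbb H(\partial g_p^k(x),\partial g_p^k(x')),\mathbb H(\partial h_p^k(x),\partial h_p^k(x'))\}\le\ell_k\|x-x'\|$ $\forall x,x',p$. Assumption 4: each $\sum_{p\le m_1}\varphi_p(f^k_p)+\sum_{p>m_1}\delta_{(-\infty,0]}(f^k_p)$ is level-bounded. Assumption 5: for every $\bar x\in\bigcap_p\operatorname{dom}F_p$, if $0=\sum_py_pv_p$ with $(y_p,v_p)\in(\bigcup\{\mathcal N_{\operatorname{dom}\varphi_p}(t):t\in T_p(\bar x)\}\times\operatorname{con}\partial_Af_p(\bar x))\cup(\mathbb{R}\times[\partial_A^\infty f_p(\bar x)\setminus\{0\}])$ for each $p$, then all $y_p=0$; here $T_p(x)=\{t:\exists$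 infinite $N$, $x^k\to x$, $f^k_p(x^k)\to_Nt\}$, $\partial_Af_p(\bar x)=\bigcup_{x^k\to\bar x}\operatorname{Lim\,sup}_k[\partial g_p^k(x^k)-\partial h_p^k(x^k)]$, $\partial^\infty_Af_p(\bar x)=\bigcup_{x^k\to\bar x}\operatorname{Lim\,sup}^\infty_k[\partial g_p^k(x^k)-\partial h_p^k(x^k)]$ (outer limit $\{u:\exists$ infinite $N$, $u^k\in C^k$, $u^k\to_Nu\}$; horizon outer limit $\{0\}\cup\{u:\exists$ infinite $N,\lambda_k\downarrow0,u^k\in C^k,\lambda_ku^k\to_Nu\}$). Method: $\lambda>0$, positive $\epsilon_k\downarrow0,\delta_k\downarrow0$ with $\delta_k/(\lambda+\ell_k)\downarrow0$, $\sigma^k_p=\sum_{k'\ge k}\widehat\alpha^{k'}_p$; at $y$ pick $a_p\in\partial h^k_p(y)$, $b_p\in\partial g^k_p(y)$; $f^{k,\mathrm{up}}_p(x;y)=g^k_p(x)-h_p^k(y)-a_p^\top(x-y)+\sigma_p^k$; $f_p^{k,\mathrm{lo}}(x;y)=g_p^k(y)+b_p^\top(x-y)-h_p^k(x)$; $\widehat F_p^k(x;y)=\varphi_p^\uparrow(f^{k,\mathrm{up}}_p(x;y))+\varphi_p^\downarrow(f^{k,\mathrm{lo}}_p(x;y))$. Subproblem at $y$: $\operatorname{argmin}\{\sum_{p\le m_1}\widehat F^k_p(x;y)+\frac\lambda2\|x-y\|^2:f^{k,\mathrm{up}}_p(x;y)\le0,p>m_1\}$. Iterates: $x^{k,0}=x^k$,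 $x^{k,i+1}$ = subproblem solution at $y=x^{k,i}$; $i_k$ first $i$ with $f_p^{k,\mathrm{up}}(x^{k,i+1};x^{k,i})\le f_p^k(x^{k,i+1})+\sigma_p^k+\epsilon_k$ $\forall p$, $f_p^{k,\mathrm{lo}}(x^{k,i+1};x^{k,i})\ge f_p^k(x^{k,i+1})-\epsilon_k$ for $p\in I_2$, $\|x^{k,i+1}-x^{k,i}\|\le\delta_k/(\lambda+\ell_k)$; $x^{k+1}=x^{k,i_k}$. Assumption 6: for all $k$ and every pair $(x',x'')$ with $x''$ the subproblem solution at $y=x'$, if $y_p\in\mathcal N_{(-\infty,0]}(f^{k,\mathrm{up}}_p(x'';x'))$ ($p>m_1$) satisfy $0\in\sum_{p>m_1}y_p\partial f_p^{k,\mathrm{up}}(x'';x')$, then all these $y_p=0$. $Y^k(x^{k+1})$: set of $(y_{1,1},y_{1,2},\dots,y_{m,1},y_{m,2})$ with $0\in\sum_p[y_{p,1}\partial f^{k,\mathrm{up}}_p(x^{k,i_k+1};x^{k,i_k})+y_{p,2}\partial f_p^{k,\mathrm{lo}}(x^{k,i_k+1};x^{k,i_k})]+\lambda(x^{k,i_k+1}-x^{k,i_k})$, $y_{p,1}\in\partial\varphi_p^\uparrow(f_p^{k,\mathrm{up}}(x^{k,i_k+1};x^{k,i_k}))$, $y_{p,2}\in\partial\varphi_p^\downarrow(f_p^{k,\mathrm{lo}}(x^{k,i_k+1};x^{k,i_k}))$. *)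

theory Defs
  imports "HOL-Analysis.Analysis" "HOL-Library.Extended_Real"
begin

definition csubdiff :: "('a::real_inner \<Rightarrow> real) \<Rightarrow> 'a \<Rightarrow> 'a set" where
  "csubdiff f x = {v. \<forall>z. f x + inner v (z - x) \<le> f z}"

text \<open>Subdifferential (in the sense of concave analysis, i.e. the superdifferential)
  of a concave real-valued function; used for the concave minorants f^lo.\<close>
definition csupdiff :: "('a::real_inner \<Rightarrow> real) \<Rightarrow> 'a \<Rightarrow> 'a set" where
  "csupdiff f x = {v. \<forall>z. f z \<le> f x + inner v (z - x)}"

definition esubdiff1 :: "(real \<Rightarrow> ereal) \<Rightarrow> real \<Rightarrow> real set" where
  "esubdiff1 F t = {s. F t \<noteq> \<infinity> \<and> F t \<noteq> -\<infinity> \<and> (\<forall>z. F t + ereal (s * (z - t)) \<le> F z)}"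

definition ncone1 :: "real set \<Rightarrow> real \<Rightarrow> real set" where
  "ncone1 C t = (if t \<in> C then {s. \<forall>z\<in>C. s * (z - t) \<le> 0} else {})"

definition hausd :: "'a::metric_space set \<Rightarrow> 'a set \<Rightarrow> ereal" where
  "hausd S T = max (SUP x\<in>S. ereal (infdist x T)) (SUP y\<in>T. ereal (infdist y S))"

text \<open>Epi-convergence (Rockafellar--Wets, Prop. 7.2).\<close>
definition epi_conv :: "(nat \<Rightarrow> 'a::metric_space \<Rightarrow> ereal) \<Rightarrow> ('a \<Rightarrow> ereal) \<Rightarrow> bool" where
  "epi_conv Fs F \<longleftrightarrow> (\<forall>x.
      (\<forall>xs. xs \<longlonglongrightarrow> x \<longrightarrow> F x \<le> liminf (\<lambda>k. Fs k (xs k))) \<and>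
      (\<exists>xs. xs \<longlonglongrightarrow> x \<and> limsup (\<lambda>k. Fs k (xs k)) \<le> F x))"

definition conv_along :: "nat set \<Rightarrow> (nat \<Rightarrow> 'a::metric_space) \<Rightarrow> 'a \<Rightarrow> bool" where
  "conv_along N s l \<longleftrightarrow> (\<forall>e>0. \<exists>K. \<forall>k\<in>N. K \<le> k \<longrightarrow> dist (s k) l < e)"

definition Phi :: "nat \<Rightarrow> (nat \<Rightarrow> real \<Rightarrow> real) \<Rightarrow> nat \<Rightarrow> real \<Rightarrow> ereal" where
  "Phi m1 phi p t = (if p \<le> m1 then ereal (phi p t) else (if t \<le> 0 then 0 else \<infinity>))"

text \<open>Monotonic decomposition phi = phi_up + phi_dn.\<close>
definition dec_up :: "(real \<Rightarrow> ereal) \<Rightarrow> real \<Rightarrow> ereal" where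
  "dec_up F z = (if mono F then F z else if antimono F then 0
     else (let z0 = (SOME z0. \<forall>w. F z0 \<le> F w) in if z \<le> z0 then F z0 else F z))"

definition dec_dn :: "(real \<Rightarrow> ereal) \<Rightarrow> real \<Rightarrow> ereal" where
  "dec_dn F z = (if mono F then 0 else if antimono F then F z
     else (let z0 = (SOME z0. \<forall>w. F z0 \<le> F w) in if z \<le> z0 then F z - F z0 else 0))"

definition I1 :: "nat \<Rightarrow> nat \<Rightarrow> (nat \<Rightarrow> real \<Rightarrow> real) \<Rightarrow> nat set" where
  "I1 m m1 phi = {p\<in>{1..m}. mono (Phi m1 phi p)}"

definition I2 :: "nat \<Rightarrow> nat \<Rightarrow> (nat \<Rightarrow> real \<Rightarrow> real) \<Rightarrow> nat set" where
  "I2 m m1 phi = {1..m} - I1 m m1 phi"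

definition domF :: "nat \<Rightarrow> (nat \<Rightarrow> real \<Rightarrow> real) \<Rightarrow> (nat \<Rightarrow> 'a \<Rightarrow> real) \<Rightarrow> nat \<Rightarrow> 'a set" where
  "domF m1 phi f p = {x. Phi m1 phi p (f p x) \<noteq> \<infinity>}"

definition dcf :: "(nat \<Rightarrow> nat \<Rightarrow> 'a \<Rightarrow> real) \<Rightarrow> (nat \<Rightarrow> nat \<Rightarrow> 'a \<Rightarrow> real) \<Rightarrow> nat \<Rightarrow> nat \<Rightarrow> 'a \<Rightarrow> real" where
  "dcf g h k p x = g k p x - h k p x"

definition Tset :: "(nat \<Rightarrow> nat \<Rightarrow> 'a::metric_space \<Rightarrow> real) \<Rightarrow> nat \<Rightarrow> 'a \<Rightarrow> real set" where
  "Tset fk p x = {t. \<exists>N xs. infinite N \<and> xs \<longlonglongrightarrow> x \<and> conv_along N (\<lambda>k. fk k p (xs k)) t}"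

definition dcsub :: "(nat \<Rightarrow> nat \<Rightarrow> 'a::real_inner \<Rightarrow> real) \<Rightarrow> (nat \<Rightarrow> nat \<Rightarrow> 'a \<Rightarrow> real) \<Rightarrow> nat \<Rightarrow> nat \<Rightarrow> 'a \<Rightarrow> 'a set" where
  "dcsub g h k p x = {s - t |s t. s \<in> csubdiff (g k p) x \<and> t \<in> csubdiff (h k p) x}"

definition dA :: "(nat \<Rightarrow> nat \<Rightarrow> 'a::real_inner \<Rightarrow> real) \<Rightarrow> (nat \<Rightarrow> nat \<Rightarrow> 'a \<Rightarrow> real) \<Rightarrow> nat \<Rightarrow> 'a \<Rightarrow> 'a set" where
  "dA g h p x = {u. \<exists>xs N us. xs \<longlonglongrightarrow> x \<and> infinite N \<and>
      (\<forall>k\<in>N. us k \<in> dcsub g h k p (xs k)) \<and> conv_along N us u}"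

definition dAinf :: "(nat \<Rightarrow> nat \<Rightarrow> 'a::real_inner \<Rightarrow> real) \<Rightarrow> (nat \<Rightarrow> nat \<Rightarrow> 'a \<Rightarrow> real) \<Rightarrow> nat \<Rightarrow> 'a \<Rightarrow> 'a set" where
  "dAinf g h p x = insert 0 {u. \<exists>xs N us lk. xs \<longlonglongrightarrow> x \<and> infinite N \<and>
      (\<forall>k. 0 < lk k) \<and> antimono lk \<and> lk \<longlonglongrightarrow> 0 \<and>
      (\<forall>k\<in>N. us k \<in> dcsub g h k p (xs k)) \<and> conv_along N (\<lambda>k. lk k *\<^sub>R us k) u}"

definition sigma :: "(nat \<Rightarrow> nat \<Rightarrow> real) \<Rightarrow> nat \<Rightarrow> nat \<Rightarrow> real" where
  "sigma ahat k p = (\<Sum>j. ahat (k + j) p)"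

text \<open>f_p^{k,up}(x;y) with a = (a_p)_p the chosen subgradients of h^k_p at y.\<close>
definition fup :: "(nat \<Rightarrow> nat \<Rightarrow> 'a::real_inner \<Rightarrow> real) \<Rightarrow> (nat \<Rightarrow> nat \<Rightarrow> 'a \<Rightarrow> real) \<Rightarrow>
    (nat \<Rightarrow> nat \<Rightarrow> real) \<Rightarrow> (nat \<Rightarrow> 'a) \<Rightarrow> nat \<Rightarrow> nat \<Rightarrow> 'a \<Rightarrow> 'a \<Rightarrow> real" where
  "fup g h ahat a k p y x = g k p x - h k p y - inner (a p) (x - y) + sigma ahat k p"

text \<open>f_p^{k,lo}(x;y) with b = (b_p)_p the chosen subgradients of g^k_p at y.\<close>
definition flo :: "(nat \<Rightarrow> nat \<Rightarrow> 'a::real_inner \<Rightarrow> real) \<Rightarrow> (nat \<Rightarrow> nat \<Rightarrow> 'a \<Rightarrow> real) \<Rightarrow>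
    (nat \<Rightarrow> 'a) \<Rightarrow> nat \<Rightarrow> nat \<Rightarrow> 'a \<Rightarrow> 'a \<Rightarrow> real" where
  "flo g h b k p y x = g k p y + inner (b p) (x - y) - h k p x"

definition subobj :: "nat \<Rightarrow> (nat \<Rightarrow> real \<Rightarrow> real) \<Rightarrow> (nat \<Rightarrow> nat \<Rightarrow> 'a::real_inner \<Rightarrow> real) \<Rightarrow>
    (nat \<Rightarrow> nat \<Rightarrow> 'a \<Rightarrow> real) \<Rightarrow> (nat \<Rightarrow> nat \<Rightarrow> real) \<Rightarrow> real \<Rightarrow> nat \<Rightarrow> (nat \<Rightarrow> 'a) \<Rightarrow> (nat \<Rightarrow> 'a) \<Rightarrow>
    'a \<Rightarrow> 'a \<Rightarrow> ereal" where
  "subobj m1 phi g h ahat lam k a b y x =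
     (\<Sum>p\<in>{1..m1}. dec_up (Phi m1 phi p) (fup g h ahat a k p y x)
                 + dec_dn (Phi m1 phi p) (flo g h b k p y x))
     + ereal (lam / 2 * (norm (x - y))\<^sup>2)"

definition subsol :: "nat \<Rightarrow> nat \<Rightarrow> (nat \<Rightarrow> real \<Rightarrow> real) \<Rightarrow> (nat \<Rightarrow> nat \<Rightarrow> 'a::real_inner \<Rightarrow> real) \<Rightarrow>
    (nat \<Rightarrow> nat \<Rightarrow> 'a \<Rightarrow> real) \<Rightarrow> (nat \<Rightarrow> nat \<Rightarrow> real) \<Rightarrow> real \<Rightarrow> nat \<Rightarrow> (nat \<Rightarrow> 'a) \<Rightarrow> (nat \<Rightarrow> 'a) \<Rightarrow>
    'a \<Rightarrow> 'a \<Rightarrow> bool" where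
  "subsol m m1 phi g h ahat lam k a b y x \<longleftrightarrow>
     (\<forall>p\<in>{m1<..m}. fup g h ahat a k p y x \<le> 0) \<and>
     (\<forall>x'. (\<forall>p\<in>{m1<..m}. fup g h ahat a k p y x' \<le> 0) \<longrightarrow>
        subobj m1 phi g h ahat lam k a b y x \<le> subobj m1 phi g h ahat lam k a b y x')"

text \<open>Inner stopping test at (y, x) = (x^{k,i}, x^{k,i+1}).\<close>
definition stoptest :: "nat \<Rightarrow> nat \<Rightarrow> (nat \<Rightarrow> real \<Rightarrow> real) \<Rightarrow> (nat \<Rightarrow> nat \<Rightarrow> 'a::real_inner \<Rightarrow> real) \<Rightarrow>
    (nat \<Rightarrow> nat \<Rightarrow> 'a \<Rightarrow> real) \<Rightarrow> (nat \<Rightarrow> nat \<Rightarrow> real) \<Rightarrow> real \<Rightarrow> (nat \<Rightarrow> real) \<Rightarrow> (nat \<Rightarrow> real) \<Rightarrow>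
    (nat \<Rightarrow> real) \<Rightarrow> nat \<Rightarrow> (nat \<Rightarrow> 'a) \<Rightarrow> (nat \<Rightarrow> 'a) \<Rightarrow> 'a \<Rightarrow> 'a \<Rightarrow> bool" where
  "stoptest m m1 phi g h ahat lam eps del ell k a b y x \<longleftrightarrow>
     (\<forall>p\<in>{1..m}. fup g h ahat a k p y x \<le> dcf g h k p x + sigma ahat k p + eps k) \<and>
     (\<forall>p\<in>I2 m m1 phi. flo g h b k p y x \<ge> dcf g h k p x - eps k) \<and>
     norm (x - y) \<le> del k / (lam + ell k)"

text \<open>The set Y^k(x^{k+1}); fU p = f_p^{k,up}(.;x^{k,i_k}), fL p = f_p^{k,lo}(.;x^{k,i_k}),
  xn = x^{k,i_k+1}, xo = x^{k,i_k}.  Elements are pairs (y1,y2) with y1 p = y_{p,1},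
  y2 p = y_{p,2}, and zero outside {1..m}.\<close>
definition Yset :: "nat \<Rightarrow> nat \<Rightarrow> (nat \<Rightarrow> real \<Rightarrow> real) \<Rightarrow> real \<Rightarrow> (nat \<Rightarrow> 'a::real_inner \<Rightarrow> real) \<Rightarrow>
    (nat \<Rightarrow> 'a \<Rightarrow> real) \<Rightarrow> 'a \<Rightarrow> 'a \<Rightarrow> ((nat \<Rightarrow> real) \<times> (nat \<Rightarrow> real)) set" where
  "Yset m m1 phi lam fU fL xn xo = {(y1, y2).
     (\<forall>p. p \<notin> {1..m} \<longrightarrow> y1 p = 0 \<and> y2 p = 0) \<and>
     (\<forall>p\<in>{1..m}. y1 p \<in> esubdiff1 (dec_up (Phi m1 phi p)) (fU p xn) \<and>
                 y2 p \<in> esubdiff1 (dec_dn (Phi m1 phi p)) (fL p xn)) \<and>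
     (\<exists>u v. (\<forall>p\<in>{1..m}. u p \<in> csubdiff (fU p) xn \<and> v p \<in> csupdiff (fL p) xn) \<and>
        (\<Sum>p\<in>{1..m}. y1 p *\<^sub>R u p + y2 p *\<^sub>R v p) + lam *\<^sub>R (xn - xo) = 0)}"

definition ynorm :: "nat \<Rightarrow> (nat \<Rightarrow> real) \<times> (nat \<Rightarrow> real) \<Rightarrow> real" where
  "ynorm m y = sqrt (\<Sum>p\<in>{1..m}. (fst y p)\<^sup>2 + (snd y p)\<^sup>2)"

end

theory Submission
  imports Defs
begin

(*
  Each set Y^k is bounded: if not, normalise a divergent sequence of its multipliers by the mass
  of the constraint multipliers; a limit point violates Assumption 6. So if the family were not
  uniformly bounded, there would be outer iterations k_j -> oo with multipliers of norm >= j and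
  centres x^{k_j,i_{k_j}} converging to some xbar, which is feasible by epi-convergence.
  The multipliers of the finite convex phi_p stay bounded, because the values f_p^{k,up} and
  f_p^{k,lo} at the iterates stay bounded (Assumption 1). Divide the KKT equation of the
  subproblems by its size. Assumption 3 replaces the subgradients taken at the two points
  x^{k,i_k}, x^{k,i_k+1} by elements of dg - dh at one of them, up to delta_k -> 0, so every
  term converges either to a multiple of an element of d_A f_p(xbar) or to a direction in the
  horizon set; the latter is impossible for p in I_2. The limits then satisfy the hypotheses of
  Assumption 5 at xbar, which forces them to vanish, contradicting the normalisation.
*)

lemma finite_common_convergent_subseq:
  fixes s :: "nat \<Rightarrow> 'i \<Rightarrow> 'b::heine_borel"
  assumes "finite P" and "\<And>p. p \<in> P \<Longrightarrow> bounded (range (\<lambda>j. s j p))"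
  shows "\<exists>r l. strict_mono r \<and> (\<forall>p\<in>P. (\<lambda>j. s (r j) p) \<longlonglongrightarrow> l p)"
  using assms
proof (induction P rule: finite_induct)
  case empty
  have "strict_mono (\<lambda>j::nat. j)" by (simp add: strict_mono_def)
  then show ?case by blast
next
  case (insert q P)
  then obtain r l where r: "strict_mono r" "\<forall>p\<in>P. (\<lambda>j. s (r j) p) \<longlonglongrightarrow> l p" by blast
  have "bounded (range (\<lambda>j. s (r j) q))"
    using insert.prems[of q] by (rule bounded_subset) auto
  then obtain l' r' where r': "strict_mono r'" "((\<lambda>j. s (r j) q) \<circ> r') \<longlonglongrightarrow> l'"
    using bounded_imp_convergent_subsequence by blast
  have "(\<lambda>j. s ((r \<circ> r') j) p) \<longlonglongrightarrow> (l(q := l')) p" if "p \<in> insert q P" for p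
  proof (cases "p = q")
    case True
    then show ?thesis using r' by (simp add: o_def)
  next
    case False
    then have "((\<lambda>j. s (r j) p) \<circ> r') \<longlonglongrightarrow> l p"
      using that r r' LIMSEQ_subseq_LIMSEQ by auto
    then show ?thesis using False by (simp add: o_def)
  qed
  moreover have "strict_mono (r \<circ> r')" using r r' strict_mono_o by blast
  ultimately show ?case by blast
qed

lemma eventually_bounded_finite:
  fixes Q :: "nat \<Rightarrow> 'i \<Rightarrow> real"
  assumes "finite P" and "\<And>p. p \<in> P \<Longrightarrow> \<exists>M. eventually (\<lambda>j. Q j p \<le> M) sequentially"
  shows "\<exists>M. eventually (\<lambda>j. \<forall>p\<in>P. Q j p \<le> M) sequentially"
proof -
  have "\<forall>p\<in>P. \<exists>M. eventually (\<lambda>j. Q j p \<le> M) sequentially" using assms(2) by blast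
  then obtain M where "\<forall>p\<in>P. eventually (\<lambda>j. Q j p \<le> M p) sequentially"
    by (rule bchoice[THEN exE])
  then have "eventually (\<lambda>j. \<forall>p\<in>P. Q j p \<le> M p) sequentially"
    by (rule eventually_ball_finite[OF assms(1)])
  moreover have bound: "M p \<le> (\<Sum>q\<in>P. \<bar>M q\<bar>)" if "p \<in> P" for p
    using member_le_sum[OF that, of "\<lambda>q. \<bar>M q\<bar>"] assms(1) by simp
  ultimately have "eventually (\<lambda>j. \<forall>p\<in>P. Q j p \<le> (\<Sum>q\<in>P. \<bar>M q\<bar>)) sequentially"
    by (elim eventually_mono) (meson bound order_trans)
  then show ?thesis by blast
qed

lemma tendsto_zero_scaleR_bounded:
  fixes f :: "nat \<Rightarrow> 'b::real_normed_vector"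
  assumes "c \<longlonglongrightarrow> 0" and "eventually (\<lambda>j. norm (f j) \<le> B) sequentially"
  shows "(\<lambda>j. c j *\<^sub>R f j) \<longlonglongrightarrow> 0"
proof (rule Lim_null_comparison)
  show "eventually (\<lambda>j. norm (c j *\<^sub>R f j) \<le> \<bar>c j\<bar> * B) sequentially"
    using assms(2) by eventually_elim (simp add: mult_left_mono)
  show "(\<lambda>j. \<bar>c j\<bar> * B) \<longlonglongrightarrow> 0"
    using tendsto_mult_left_zero[OF tendsto_rabs_zero[OF assms(1)]] by simp
qed

lemma inverse_tendsto_zero_linear_growth:
  fixes T :: "nat \<Rightarrow> real"
  assumes "eventually (\<lambda>j. real j - C \<le> T j) sequentially"
  shows "(\<lambda>j. 1 / T j) \<longlonglongrightarrow> 0"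
proof -
  have "filterlim (\<lambda>j. real j - C) at_top sequentially"
    using filterlim_tendsto_add_at_top[OF tendsto_const filterlim_real_sequentially, of "- C"] by simp
  then have "filterlim T at_top sequentially" using assms by (rule filterlim_at_top_mono)
  then show ?thesis using tendsto_inverse_0_at_top by (simp add: inverse_eq_divide)
qed

lemma LIMSEQ_either:
  fixes X X' Z :: "nat \<Rightarrow> 'b::metric_space"
  assumes "X \<longlonglongrightarrow> l" and "X' \<longlonglongrightarrow> l" and "\<And>j. Z j = X j \<or> Z j = X' j"
  shows "Z \<longlonglongrightarrow> l"
proof (rule tendstoI)
  fix e :: real assume "0 < e"
  with assms(1,2) have "eventually (\<lambda>j. dist (X j) l < e \<and> dist (X' j) l < e) sequentially"
    by (auto intro: eventually_conj tendstoD)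
  then show "eventually (\<lambda>j. dist (Z j) l < e) sequentially"
    by eventually_elim (metis assms(3))
qed

lemma strict_mono_extend_LIMSEQ:
  fixes s :: "nat \<Rightarrow> 'b::metric_space"
  assumes "strict_mono \<sigma>" and "s \<longlonglongrightarrow> l"
  obtains X where "X \<longlonglongrightarrow> l" and "\<And>j. X (\<sigma> j) = s j"
proof
  define X where "X k = (if k \<in> range \<sigma> then s (inv \<sigma> k) else l)" for k
  have inv: "inv \<sigma> (\<sigma> j) = j" for j
    using assms(1) by (simp add: inv_f_f strict_mono_imp_inj_on)
  then show "X (\<sigma> j) = s j" for j by (simp add: X_def)
  show "X \<longlonglongrightarrow> l"
  proof (rule tendstoI)
    fix e :: real assume "0 < e"
    then obtain J where J: "\<And>j. J \<le> j \<Longrightarrow> dist (s j) l < e"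
      using assms(2) by (auto simp: lim_sequentially)
    have "dist (X k) l < e" if "\<sigma> J \<le> k" for k
    proof (cases "k \<in> range \<sigma>")
      case True
      then obtain j where "k = \<sigma> j" by auto
      with that have "J \<le> j" using assms(1) strict_mono_less_eq by blast
      then show ?thesis using J \<open>k = \<sigma> j\<close> inv by (simp add: X_def)
    qed (simp add: X_def \<open>0 < e\<close>)
    then show "eventually (\<lambda>k. dist (X k) l < e) sequentially"
      unfolding eventually_sequentially by blast
  qed
qed

lemma conv_along_range_subseq:
  assumes "strict_mono \<sigma>" and "(\<lambda>j. F (\<sigma> j)) \<longlonglongrightarrow> l"
  shows "conv_along (range \<sigma>) F l"
  unfolding conv_along_def
proof (intro allI impI)
  fix e :: real assume "0 < e"
  then obtain J where J: "\<And>j. J \<le> j \<Longrightarrow> dist (F (\<sigma> j)) l < e"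
    using assms(2) by (auto simp: lim_sequentially)
  have "dist (F (\<sigma> j)) l < e" if "\<sigma> J \<le> \<sigma> j" for j
    using J that assms(1) strict_mono_less_eq by blast
  then show "\<exists>K. \<forall>k\<in>range \<sigma>. K \<le> k \<longrightarrow> dist (F k) l < e" by blast
qed

lemma conv_along_imp_LIMSEQ_subseq:
  assumes "conv_along N s l" and "strict_mono \<kappa>" and "\<And>j. \<kappa> j \<in> N"
  shows "(\<lambda>j. s (\<kappa> j)) \<longlonglongrightarrow> l"
proof (rule tendstoI)
  fix e :: real assume "0 < e"
  then obtain K where K: "\<forall>k\<in>N. K \<le> k \<longrightarrow> dist (s k) l < e"
    using assms(1) by (auto simp: conv_along_def)
  have "dist (s (\<kappa> j)) l < e" if "K \<le> j" for j
    using K assms(3) that seq_suble[OF assms(2), of j] by auto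
  then show "eventually (\<lambda>j. dist (s (\<kappa> j)) l < e) sequentially"
    unfolding eventually_sequentially by blast
qed

lemma Tset_subseqI:
  assumes "strict_mono \<sigma>" and "xs \<longlonglongrightarrow> x" and "(\<lambda>j. fk (\<sigma> j) p (xs j)) \<longlonglongrightarrow> t"
  shows "t \<in> Tset fk p x"
proof -
  obtain X where X: "X \<longlonglongrightarrow> x" "\<And>j. X (\<sigma> j) = xs j"
    using strict_mono_extend_LIMSEQ[OF assms(1,2)] by blast
  have "conv_along (range \<sigma>) (\<lambda>k. fk k p (X k)) t"
    by (rule conv_along_range_subseq[OF assms(1)]) (use assms(3) X(2) in simp)
  moreover have "infinite (range \<sigma>)"
    using assms(1) strict_mono_imp_inj_on range_inj_infinite by blast
  ultimately show ?thesis unfolding Tset_def using X(1) by blast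
qed

lemma dA_subseqI:
  assumes "strict_mono \<sigma>" and "xs \<longlonglongrightarrow> x" and "\<And>j. us j \<in> dcsub g h (\<sigma> j) p (xs j)"
    and "us \<longlonglongrightarrow> u"
  shows "u \<in> dA g h p x"
proof -
  obtain X where X: "X \<longlonglongrightarrow> x" "\<And>j. X (\<sigma> j) = xs j"
    using strict_mono_extend_LIMSEQ[OF assms(1,2)] by blast
  obtain U where U: "U \<longlonglongrightarrow> u" "\<And>j. U (\<sigma> j) = us j"
    using strict_mono_extend_LIMSEQ[OF assms(1,4)] by blast
  have "conv_along (range \<sigma>) U u"
    by (rule conv_along_range_subseq[OF assms(1)]) (use assms(4) U(2) in simp)
  moreover have "infinite (range \<sigma>)"
    using assms(1) strict_mono_imp_inj_on range_inj_infinite by blast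
  moreover have "\<forall>k\<in>range \<sigma>. U k \<in> dcsub g h k p (X k)" using X(2) U(2) assms(3) by auto
  ultimately show ?thesis unfolding dA_def using X(1) by blast
qed

lemma decseq_subseq_of_positive_null:
  fixes \<beta> :: "nat \<Rightarrow> real"
  assumes "\<And>j. 0 < \<beta> j" and "\<beta> \<longlonglongrightarrow> 0"
  obtains r where "strict_mono r" and "decseq (\<lambda>j. \<beta> (r j))"
proof -
  obtain r where r: "strict_mono r" "monoseq (\<lambda>j. \<beta> (r j))" using seq_monosub by blast
  have "\<not> incseq (\<lambda>j. \<beta> (r j))"
  proof
    assume "incseq (\<lambda>j. \<beta> (r j))"
    moreover have "(\<lambda>j. \<beta> (r j)) \<longlonglongrightarrow> 0"
      using LIMSEQ_subseq_LIMSEQ[OF assms(2) r(1)] by (simp add: o_def)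
    ultimately have "\<beta> (r 0) \<le> 0" by (rule incseq_le)
    then show False using assms(1) not_le by blast
  qed
  then show ?thesis using that r by (auto simp: monoseq_iff)
qed

lemma antimono_interpolation:
  fixes b :: "nat \<Rightarrow> real"
  assumes \<sigma>: "strict_mono \<sigma>" and "decseq b" and "\<And>j. 0 < b j" and "b \<longlonglongrightarrow> 0"
  obtains lk where "\<And>k. 0 < lk k" and "antimono lk" and "lk \<longlonglongrightarrow> 0" and "\<And>j. lk (\<sigma> j) = b j"
proof
  define L where "L k = (LEAST j. k \<le> \<sigma> j)" for k
  have L_ge: "k \<le> \<sigma> (L k)" for k
    unfolding L_def by (rule LeastI[of _ k]) (simp add: seq_suble[OF \<sigma>])
  have L_le: "k \<le> \<sigma> j \<Longrightarrow> L k \<le> j" for k j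
    unfolding L_def by (rule Least_le)
  have L_mono: "mono L"
    by (rule monoI) (meson L_ge L_le order_trans)
  show "(b \<circ> L) (\<sigma> j) = b j" for j
  proof -
    have "L (\<sigma> j) = j"
      using L_le[of "\<sigma> j" j] L_ge[of "\<sigma> j"] \<sigma> strict_mono_less_eq by fastforce
    then show ?thesis by simp
  qed
  show "0 < (b \<circ> L) k" for k using assms(3) by simp
  show "antimono (b \<circ> L)"
    using L_mono \<open>decseq b\<close> by (auto simp: antimono_def mono_def)
  have "filterlim L sequentially sequentially"
    unfolding filterlim_at_top eventually_sequentially
  proof (intro allI exI[of _ "Suc (\<sigma> _)"] impI)
    fix Z k assume "Suc (\<sigma> Z) \<le> k"
    then have "\<sigma> Z < \<sigma> (L k)" using L_ge[of k] by simp
    then show "Z \<le> L k" using \<sigma> strict_mono_less by (metis less_imp_le)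
  qed
  then show "(b \<circ> L) \<longlonglongrightarrow> 0" using filterlim_compose[OF assms(4)] by (simp add: o_def)
qed

lemma dAinf_subseqI:
  assumes \<sigma>: "strict_mono \<sigma>" and "xs \<longlonglongrightarrow> x" and us: "\<And>j. us j \<in> dcsub g h (\<sigma> j) p (xs j)"
    and "\<And>j. 0 < \<beta> j" and "\<beta> \<longlonglongrightarrow> 0" and lim: "(\<lambda>j. \<beta> j *\<^sub>R us j) \<longlonglongrightarrow> d"
  shows "d \<in> dAinf g h p x"
proof -
  obtain r where r: "strict_mono r" "decseq (\<lambda>j. \<beta> (r j))"
    using decseq_subseq_of_positive_null assms(4,5) by blast
  define \<sigma>' where "\<sigma>' = \<sigma> \<circ> r"
  have \<sigma>': "strict_mono \<sigma>'" unfolding \<sigma>'_def using \<sigma> r(1) strict_mono_o by blast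
  have "(\<lambda>j. \<beta> (r j)) \<longlonglongrightarrow> 0" using LIMSEQ_subseq_LIMSEQ[OF assms(5) r(1)] by (simp add: o_def)
  then obtain lk where lk: "\<And>k. 0 < lk k" "antimono lk" "lk \<longlonglongrightarrow> 0" "\<And>j. lk (\<sigma>' j) = \<beta> (r j)"
    using antimono_interpolation[OF \<sigma>' r(2)] assms(4) by metis
  have "(\<lambda>j. xs (r j)) \<longlonglongrightarrow> x" using LIMSEQ_subseq_LIMSEQ[OF assms(2) r(1)] by (simp add: o_def)
  then obtain X where X: "X \<longlonglongrightarrow> x" "\<And>j. X (\<sigma>' j) = xs (r j)"
    using strict_mono_extend_LIMSEQ[OF \<sigma>'] by metis
  define U where "U k = us (r (inv \<sigma>' k))" for k
  have U: "U (\<sigma>' j) = us (r j)" for j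
    using \<sigma>' by (simp add: U_def inv_f_f strict_mono_imp_inj_on)
  have "(\<lambda>j. lk (\<sigma>' j) *\<^sub>R U (\<sigma>' j)) \<longlonglongrightarrow> d"
    using LIMSEQ_subseq_LIMSEQ[OF lim r(1)] by (simp add: lk(4) U o_def)
  then have "conv_along (range \<sigma>') (\<lambda>k. lk k *\<^sub>R U k) d" by (rule conv_along_range_subseq[OF \<sigma>'])
  moreover have "infinite (range \<sigma>')"
    using \<sigma>' strict_mono_imp_inj_on range_inj_infinite by blast
  moreover have "\<forall>k\<in>range \<sigma>'. U k \<in> dcsub g h k p (X k)"
    using X(2) U us by (auto simp: \<sigma>'_def)
  ultimately show ?thesis unfolding dAinf_def using X(1) lk(1-3) by blast
qed

lemma closed_csubdiff: "closed (csubdiff f x)"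
proof -
  have "csubdiff f x = (\<Inter>z. {v. f x + inner v (z - x) \<le> f z})"
    unfolding csubdiff_def by auto
  moreover have "closed {v. f x + inner v (z - x) \<le> f z}" for z
    by (intro closed_Collect_le continuous_intros)
  ultimately show ?thesis by (simp add: closed_INT)
qed

lemma convex_on_bounded_cball:
  fixes f :: "'a::euclidean_space \<Rightarrow> real"
  assumes "convex_on UNIV f"
  shows "\<exists>M. \<forall>z\<in>cball x r. \<bar>f z\<bar> \<le> M"
proof -
  have "continuous_on (cball x r) f"
    using convex_on_continuous[OF open_UNIV assms] continuous_on_subset by blast
  then have "bounded (f ` cball x r)" by (simp add: compact_continuous_image compact_imp_bounded)
  then show ?thesis by (auto simp: bounded_iff)
qed

lemma bounded_csubdiff:
  fixes f :: "'a::euclidean_space \<Rightarrow> real"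
  assumes "convex_on UNIV f"
  shows "bounded (csubdiff f x)"
proof -
  obtain M where M: "\<forall>z\<in>cball x 1. \<bar>f z\<bar> \<le> M" using convex_on_bounded_cball[OF assms] by blast
  have "norm v \<le> 2 * M" if v: "v \<in> csubdiff f x" for v
  proof (cases "v = 0")
    case True
    then show ?thesis using M[rule_format, of x] by simp
  next
    case False
    define z where "z = x + (1 / norm v) *\<^sub>R v"
    have "dist x z = 1" using False by (simp add: z_def dist_norm)
    then have "\<bar>f z\<bar> \<le> M" "\<bar>f x\<bar> \<le> M" using M by auto
    moreover have "f x + inner v (z - x) \<le> f z" using v by (simp add: csubdiff_def)
    moreover have "inner v (z - x) = norm v"
      using False by (simp add: z_def power2_norm_eq_inner[symmetric] power2_eq_square)
    ultimately show ?thesis by linarith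
  qed
  then show ?thesis by (auto simp: bounded_iff)
qed

lemma infdist_le_hausd:
  fixes S T :: "'a::metric_space set"
  assumes "hausd S T \<le> ereal r"
  shows "s \<in> S \<Longrightarrow> infdist s T \<le> r" and "t \<in> T \<Longrightarrow> infdist t S \<le> r"
proof -
  have "(SUP x\<in>S. ereal (infdist x T)) \<le> ereal r" "(SUP y\<in>T. ereal (infdist y S)) \<le> ereal r"
    using assms by (simp_all add: hausd_def)
  then show "s \<in> S \<Longrightarrow> infdist s T \<le> r" and "t \<in> T \<Longrightarrow> infdist t S \<le> r"
    by (auto simp: SUP_le_iff)
qed

lemma hausd_approx_dcsub:
  fixes G H :: "'a::euclidean_space \<Rightarrow> real"
  assumes s: "s \<in> csubdiff G z" and t: "t \<in> csubdiff H z'"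
    and "csubdiff G z' \<noteq> {}" and "csubdiff H z \<noteq> {}"
    and hd: "min (hausd (csubdiff G z) (csubdiff G z')) (hausd (csubdiff H z) (csubdiff H z')) \<le> ereal r"
  shows "\<exists>\<zeta>\<in>{z, z'}. \<exists>w\<in>{s' - t' |s' t'. s' \<in> csubdiff G \<zeta> \<and> t' \<in> csubdiff H \<zeta>}.
           norm (w - (s - t)) \<le> r"
proof (cases "hausd (csubdiff G z) (csubdiff G z') \<le> ereal r")
  case True
  obtain s' where s': "s' \<in> csubdiff G z'" "infdist s (csubdiff G z') = dist s s'"
    using infdist_attains_inf[OF closed_csubdiff] \<open>csubdiff G z' \<noteq> {}\<close> by blast
  have "norm ((s' - t) - (s - t)) \<le> r"
    using infdist_le_hausd(1)[OF True s] s'(2) by (simp add: dist_norm norm_minus_commute)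
  then show ?thesis using s' t by blast
next
  case False
  then have H: "hausd (csubdiff H z) (csubdiff H z') \<le> ereal r" using hd by (simp add: min_def split: if_splits)
  obtain t' where t': "t' \<in> csubdiff H z" "infdist t (csubdiff H z) = dist t t'"
    using infdist_attains_inf[OF closed_csubdiff] \<open>csubdiff H z \<noteq> {}\<close> by blast
  have "norm ((s - t') - (s - t)) \<le> r"
    using infdist_le_hausd(2)[OF H t] t'(2) by (simp add: dist_norm)
  then show ?thesis using s t' by blast
qed

lemma csubdiff_fup_imp:
  assumes "u \<in> csubdiff (fup g h ahat A k p y) x"
  shows "u + A p \<in> csubdiff (g k p) x"
  using assms unfolding csubdiff_def fup_def
  by (auto simp: inner_diff_right inner_add_left algebra_simps)

lemma csupdiff_flo_imp:
  assumes "v \<in> csupdiff (flo g h B k p y) x"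
  shows "B p - v \<in> csubdiff (h k p) x"
  using assms unfolding csubdiff_def csupdiff_def flo_def
  by (auto simp: inner_diff_right inner_diff_left algebra_simps)

lemma dcf_le_fup:
  assumes "A p \<in> csubdiff (h k p) y"
  shows "dcf g h k p x + sigma ahat k p \<le> fup g h ahat A k p y x"
  using assms unfolding csubdiff_def fup_def dcf_def
  by (auto simp: algebra_simps elim!: allE[of _ x])

lemma flo_le_dcf:
  assumes "B p \<in> csubdiff (g k p) y"
  shows "flo g h B k p y x \<le> dcf g h k p x"
  using assms unfolding csubdiff_def flo_def dcf_def
  by (auto simp: algebra_simps elim!: allE[of _ x])

lemma esubdiff1_zero:
  assumes "s \<in> esubdiff1 (\<lambda>z. 0) t"
  shows "s = 0"
proof -
  have "s * (z - t) \<le> 0" for z using assms by (simp add: esubdiff1_def zero_ereal_def)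
  from this[of "t + 1"] this[of "t - 1"] show ?thesis by simp
qed

lemma esubdiff1_finite:
  assumes "s \<in> esubdiff1 F t"
  obtains c where "F t = ereal c" and "\<And>z. ereal (c + s * (z - t)) \<le> F z"
proof -
  from assms have "F t \<noteq> \<infinity>" "F t \<noteq> -\<infinity>" and le: "\<And>z. F t + ereal (s * (z - t)) \<le> F z"
    by (auto simp: esubdiff1_def)
  then obtain c where "F t = ereal c" by (cases "F t") auto
  then show ?thesis using that le by simp
qed

lemma esubdiff1_mono_nonneg:
  assumes "mono F" and "s \<in> esubdiff1 F t"
  shows "0 \<le> s"
proof -
  obtain c where c: "F t = ereal c" "\<And>z. ereal (c + s * (z - t)) \<le> F z"
    using esubdiff1_finite[OF assms(2)] by blast
  have "ereal (c - s) \<le> F (t - 1)" using c(2)[of "t - 1"] by simp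
  also have "\<dots> \<le> F t" using monoD[OF assms(1), of "t - 1" t] by simp
  finally show ?thesis using c(1) by simp
qed

lemma esubdiff1_abs_le:
  assumes "s \<in> esubdiff1 F t" and "F (t + 1) \<le> ereal K" and "F (t - 1) \<le> ereal K"
    and "ereal K' \<le> F t"
  shows "\<bar>s\<bar> \<le> K - K'"
proof -
  obtain c where c: "F t = ereal c" "\<And>z. ereal (c + s * (z - t)) \<le> F z"
    using esubdiff1_finite[OF assms(1)] by blast
  have "ereal (c + s) \<le> ereal K" using c(2)[of "t + 1"] assms(2) order_trans by fastforce
  moreover have "ereal (c - s) \<le> ereal K" using c(2)[of "t - 1"] assms(3) order_trans by fastforce
  moreover have "K' \<le> c" using assms(4) c(1) by simp
  ultimately show ?thesis by simp
qed

lemma Phi_objective: "p \<le> m1 \<Longrightarrow> Phi m1 phi p = (\<lambda>t. ereal (phi p t))"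
  by (simp add: Phi_def fun_eq_iff)

lemma Phi_constraint: "m1 < p \<Longrightarrow> Phi m1 phi p = (\<lambda>t. if t \<le> 0 then 0 else \<infinity>)"
  by (auto simp: Phi_def fun_eq_iff)

lemma mono_Phi_constraint: "m1 < p \<Longrightarrow> mono (Phi m1 phi p)"
  by (auto simp: Phi_constraint mono_def)

lemma dom_Phi_constraint: "m1 < p \<Longrightarrow> {s. Phi m1 phi p s \<noteq> \<infinity>} = {..0}"
  by (auto simp: Phi_constraint)

lemma I2_subset: "I2 m m1 phi \<subseteq> {1..m1}"
proof
  fix p assume "p \<in> I2 m m1 phi"
  then have "p \<in> {1..m}" and "\<not> mono (Phi m1 phi p)" by (simp_all add: I2_def I1_def)
  then show "p \<in> {1..m1}" using mono_Phi_constraint[of m1 p phi] by (cases "p \<le> m1") auto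
qed

lemma mono_Phi_notin_I2: "p \<in> {1..m} \<Longrightarrow> p \<notin> I2 m m1 phi \<Longrightarrow> mono (Phi m1 phi p)"
  by (simp add: I2_def I1_def)

lemma dec_up_mono: "mono F \<Longrightarrow> dec_up F = F"
  by (simp add: dec_up_def fun_eq_iff)

lemma dec_dn_mono: "mono F \<Longrightarrow> dec_dn F = (\<lambda>z. 0)"
  by (simp add: dec_dn_def fun_eq_iff)

lemma esubdiff1_Phi_constraint:
  assumes "m1 < p" and "s \<in> esubdiff1 (dec_up (Phi m1 phi p)) t"
  shows "t \<le> 0" and "0 \<le> s" and "0 < s \<Longrightarrow> t = 0"
proof -
  have s: "s \<in> esubdiff1 (Phi m1 phi p) t"
    using assms dec_up_mono[OF mono_Phi_constraint] by metis
  then show t: "t \<le> 0" by (auto simp: esubdiff1_def Phi_constraint[OF assms(1)] split: if_splits)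
  show "0 \<le> s" by (rule esubdiff1_mono_nonneg[OF mono_Phi_constraint[OF assms(1)] s])
  assume "0 < s"
  obtain c where c: "Phi m1 phi p t = ereal c" "\<And>z. ereal (c + s * (z - t)) \<le> Phi m1 phi p z"
    using esubdiff1_finite[OF s] by blast
  have "s * (- t) \<le> 0"
    using c(1) c(2)[of 0] t by (simp add: Phi_constraint[OF assms(1)] zero_ereal_def)
  then show "t = 0" using t \<open>0 < s\<close> by (auto simp: zero_le_mult_iff)
qed

text \<open>The \<open>SOME\<close> in \<open>dec_up\<close> and \<open>dec_dn\<close> need not denote a minimiser; the bound
  holds for whatever point it picks.\<close>
lemma dec_abs_le:
  "\<exists>c\<ge>0. \<forall>z. \<bar>dec_up (\<lambda>z. ereal (G z)) z\<bar> \<le> ereal (\<bar>G z\<bar> + c) \<and>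
              \<bar>dec_dn (\<lambda>z. ereal (G z)) z\<bar> \<le> ereal (\<bar>G z\<bar> + c)"
proof -
  define z0 where "z0 = (SOME z0. \<forall>w. G z0 \<le> G w)"
  show ?thesis
    by (rule exI[of _ "\<bar>G z0\<bar>"]) (auto simp: dec_up_def dec_dn_def z0_def[symmetric] Let_def)
qed

lemma dec_esubdiff1_bounded:
  fixes \<phi> :: "real \<Rightarrow> real"
  assumes "convex_on UNIV \<phi>"
  shows "\<exists>M\<ge>0. \<forall>t s. \<bar>t\<bar> \<le> T \<longrightarrow>
     (s \<in> esubdiff1 (dec_up (\<lambda>z. ereal (\<phi> z))) t \<or> s \<in> esubdiff1 (dec_dn (\<lambda>z. ereal (\<phi> z))) t) \<longrightarrow>
     \<bar>s\<bar> \<le> M"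
proof -
  obtain c where c: "c \<ge> 0" "\<forall>z. \<bar>dec_up (\<lambda>z. ereal (\<phi> z)) z\<bar> \<le> ereal (\<bar>\<phi> z\<bar> + c) \<and>
                   \<bar>dec_dn (\<lambda>z. ereal (\<phi> z)) z\<bar> \<le> ereal (\<bar>\<phi> z\<bar> + c)"
    using dec_abs_le by blast
  obtain M0 where M0': "\<forall>z\<in>cball 0 (T + 1). \<bar>\<phi> z\<bar> \<le> M0"
    using convex_on_bounded_cball[OF assms] by blast
  have M0: "\<bar>\<phi> z\<bar> \<le> max 0 M0" if "\<bar>z\<bar> \<le> T + 1" for z
    using bspec[OF M0', of z] that by (simp add: mem_cball_0)
  define M where "M = max 0 M0 + c"
  have bound: "\<bar>s\<bar> \<le> 2 * M"
    if "\<bar>t\<bar> \<le> T" and F: "\<forall>z. \<bar>F z\<bar> \<le> ereal (\<bar>\<phi> z\<bar> + c)" and "s \<in> esubdiff1 F t" for s t F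
  proof -
    have F_le: "\<bar>F z\<bar> \<le> ereal M" if "\<bar>z\<bar> \<le> T + 1" for z
    proof -
      have "\<bar>F z\<bar> \<le> ereal (\<bar>\<phi> z\<bar> + c)" using F by blast
      also have "\<dots> \<le> ereal M" using M0[OF that] by (simp add: M_def)
      finally show ?thesis .
    qed
    have up: "F z \<le> ereal M" if "\<bar>z\<bar> \<le> T + 1" for z
      using F_le[OF that] by (cases "F z") auto
    have "ereal (- M) \<le> F t"
      using F_le[of t] \<open>\<bar>t\<bar> \<le> T\<close> by (cases "F t") auto
    moreover have "F (t + 1) \<le> ereal M" "F (t - 1) \<le> ereal M"
      using up \<open>\<bar>t\<bar> \<le> T\<close> by auto
    ultimately have "\<bar>s\<bar> \<le> M - (- M)"
      using esubdiff1_abs_le[OF \<open>s \<in> esubdiff1 F t\<close>] by blast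
    then show ?thesis by simp
  qed
  show ?thesis
    using bound c(2) c(1) by (intro exI[of _ "2 * M"]) (auto simp: M_def)
qed

lemma zero_in_ncone1: "t \<in> C \<Longrightarrow> 0 \<in> ncone1 C t"
  by (simp add: ncone1_def)

lemma ncone1_atMost_zeroI:
  assumes "t \<le> 0" and "0 \<le> e" and "0 < e \<Longrightarrow> t = 0"
  shows "e \<in> ncone1 {..0} t"
  using assms by (cases "e = 0") (auto simp: ncone1_def mult_nonneg_nonpos)

lemma epi_conv_le_zero_subseq:
  fixes Fs :: "nat \<Rightarrow> 'a::metric_space \<Rightarrow> ereal"
  assumes "epi_conv Fs F" and "strict_mono \<sigma>" and "zs \<longlonglongrightarrow> x" and "\<And>j. Fs (\<sigma> j) (zs j) \<le> 0"
  shows "F x \<le> 0"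
proof -
  obtain X where X: "X \<longlonglongrightarrow> x" "\<And>j. X (\<sigma> j) = zs j"
    using strict_mono_extend_LIMSEQ[OF assms(2,3)] by blast
  have "F x \<le> liminf (\<lambda>k. Fs k (X k))" using assms(1) X(1) unfolding epi_conv_def by blast
  also have "\<dots> \<le> liminf ((\<lambda>k. Fs k (X k)) \<circ> \<sigma>)" by (rule liminf_subseq_mono[OF assms(2)])
  also have "\<dots> \<le> liminf (\<lambda>j. 0::ereal)" by (rule Liminf_mono) (simp add: X(2) assms(4))
  finally show ?thesis by (simp add: Liminf_const)
qed

lemma eventually_bounded_joint_Liminf_Limsup:
  fixes F :: "nat \<Rightarrow> 'a::metric_space \<Rightarrow> real"
  assumes "- \<infinity> < Liminf (nhds z \<times>\<^sub>F sequentially) (\<lambda>(z', k). ereal (F k z'))"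
    and "Limsup (nhds z \<times>\<^sub>F sequentially) (\<lambda>(z', k). ereal (F k z')) < \<infinity>"
    and "zs \<longlonglongrightarrow> z" and "strict_mono \<kappa>"
  shows "\<exists>c C. eventually (\<lambda>j. c \<le> F (\<kappa> j) (zs j) \<and> F (\<kappa> j) (zs j) \<le> C) sequentially"
proof -
  obtain c where c: "ereal c < Liminf (nhds z \<times>\<^sub>F sequentially) (\<lambda>(z', k). ereal (F k z'))"
    using ereal_dense2[OF assms(1)] by blast
  obtain C where C: "Limsup (nhds z \<times>\<^sub>F sequentially) (\<lambda>(z', k). ereal (F k z')) < ereal C"
    using ereal_dense2[OF assms(2)] by blast
  let ?F = "\<lambda>(z', k). ereal (F k z')"
  have "eventually (\<lambda>q. ereal c < ?F q \<and> ?F q < ereal C) (nhds z \<times>\<^sub>F sequentially)"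
    using eventually_conj[OF less_LiminfD[OF c] Limsup_lessD[OF C]] .
  moreover have "filterlim (\<lambda>j. (zs j, \<kappa> j)) (nhds z \<times>\<^sub>F sequentially) sequentially"
    by (rule filterlim_Pair[OF assms(3) filterlim_subseq[OF assms(4)]])
  ultimately have "eventually (\<lambda>j. ereal c < ?F (zs j, \<kappa> j) \<and> ?F (zs j, \<kappa> j) < ereal C) sequentially"
    unfolding filterlim_iff by blast
  then have "eventually (\<lambda>j. c \<le> F (\<kappa> j) (zs j) \<and> F (\<kappa> j) (zs j) \<le> C) sequentially"
    by eventually_elim auto
  then show ?thesis by blast
qed

lemma ynorm_le_sum_abs: "ynorm m y \<le> (\<Sum>p\<in>{1..m}. \<bar>fst y p\<bar> + \<bar>snd y p\<bar>)"
proof -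
  have "ynorm m y \<le> L2_set (\<lambda>p. \<bar>fst y p\<bar> + \<bar>snd y p\<bar>) {1..m}"
    unfolding ynorm_def L2_set_def
    by (intro real_sqrt_le_mono sum_mono) (simp add: power2_sum)
  also have "\<dots> \<le> (\<Sum>p\<in>{1..m}. \<bar>\<bar>fst y p\<bar> + \<bar>snd y p\<bar>\<bar>)" by (rule L2_set_le_sum_abs)
  finally show ?thesis by simp
qed

lemma sigma_nonneg:
  assumes "summable (\<lambda>k. ahat k p)" and "\<And>k. 0 \<le> ahat k p"
  shows "0 \<le> sigma ahat k p"
  unfolding sigma_def
  using summable_ignore_initial_segment[OF assms(1), of k] assms(2)
  by (intro suminf_nonneg) (simp_all add: add.commute)

lemma sigma_tendsto_zero:
  assumes "summable (\<lambda>k. ahat k p)"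
  shows "(\<lambda>k. sigma ahat k p) \<longlonglongrightarrow> 0"
  using suminf_exist_split2[OF assms] unfolding sigma_def by (simp add: add.commute)

lemma unbounded_family_obtain_seq:
  fixes Y :: "nat \<Rightarrow> 'b set" and nf :: "'b \<Rightarrow> real"
  assumes bdd: "\<And>k. \<exists>B. \<forall>y\<in>Y k. nf y \<le> B" and unbdd: "\<not> (\<exists>B. \<forall>k\<in>S. \<forall>y\<in>Y k. nf y \<le> B)"
  obtains \<kappa> ys where "strict_mono \<kappa>" and "\<And>j. \<kappa> j \<in> S" and "\<And>j. ys j \<in> Y (\<kappa> j)"
    and "\<And>j. real j \<le> nf (ys j)"
proof -
  obtain Bk where Bk: "\<And>k y. y \<in> Y k \<Longrightarrow> nf y \<le> Bk k" using bdd by metis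
  have "\<exists>k y. k \<in> S \<and> n < k \<and> y \<in> Y k \<and> real n \<le> nf y" for n
  proof -
    define B where "B = max (real n) (Max (Bk ` {..n}))"
    from unbdd obtain k y where ky: "k \<in> S" "y \<in> Y k" "\<not> nf y \<le> B" by blast
    have "\<not> k \<le> n"
    proof
      assume "k \<le> n"
      then have "Bk k \<le> B" unfolding B_def by (simp add: le_max_iff_disj)
      then show False using Bk[OF ky(2)] ky(3) by simp
    qed
    moreover have "real n \<le> nf y" using ky(3) unfolding B_def by simp
    ultimately show ?thesis using ky by (metis not_le)
  qed
  then obtain K Y' where KY: "\<And>n. K n \<in> S \<and> n < K n \<and> Y' n \<in> Y (K n) \<and> real n \<le> nf (Y' n)"
    by metis
  define nn where "nn j = (K ^^ j) 0" for j
  have nn_Suc: "nn (Suc j) = K (nn j)" for j by (simp add: nn_def)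
  have nn_ge: "j \<le> nn j" for j
  proof (induction j)
    case (Suc j)
    then show ?case using KY[of "nn j"] nn_Suc[of j] by simp
  qed simp
  show ?thesis
  proof
    show "strict_mono (\<lambda>j. K (nn j))"
      unfolding strict_mono_Suc_iff using KY nn_Suc by metis
    show "K (nn j) \<in> S" and "Y' (nn j) \<in> Y (K (nn j))" for j using KY by blast+
    show "real j \<le> nf (Y' (nn j))" for j using KY[of "nn j"] nn_ge[of j] by linarith
  qed
qed

text \<open>The pair \<open>(shrink x, 1 / (1 + \<parallel>x\<parallel>))\<close> stays in a compact set; along a sequence with
  \<open>\<parallel>x\<^sub>j\<parallel> \<rightarrow> \<infinity>\<close> its limit records the horizon direction of \<open>x\<^sub>j\<close>.\<close>
definition shrink :: "'a::real_normed_vector \<Rightarrow> 'a" where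
  "shrink x = inverse (1 + norm x) *\<^sub>R x"

lemma norm_shrink: "norm (shrink x) = 1 - inverse (1 + norm x)"
proof -
  have "0 < 1 + norm x" by (simp add: add_pos_nonneg)
  then show ?thesis by (simp add: shrink_def field_simps)
qed

lemma norm_shrink_le: "norm (shrink x) \<le> 1"
  by (simp add: norm_shrink add_pos_nonneg)

lemma inverse_one_plus_norm: "0 < inverse (1 + norm x)" "inverse (1 + norm x) \<le> 1"
  using inverse_le_1_iff[of "1 + norm x"] by (simp_all add: add_pos_nonneg)

lemma dcsub_horizon_limit:
  fixes Ts :: "nat \<Rightarrow> 'a::real_inner"
  assumes "strict_mono \<kappa>" and "xs \<longlonglongrightarrow> x" and "\<And>j. Ts j \<in> dcsub g h (\<kappa> j) p (xs j)"
    and \<alpha>: "(\<lambda>j. shrink (Ts j)) \<longlonglongrightarrow> \<alpha>" and \<beta>: "(\<lambda>j. inverse (1 + norm (Ts j))) \<longlonglongrightarrow> 0"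
  shows "norm \<alpha> = 1" and "0 < c \<Longrightarrow> c *\<^sub>R \<alpha> \<in> dAinf g h p x"
proof -
  have "(\<lambda>j. norm (shrink (Ts j))) \<longlonglongrightarrow> 1 - 0"
    unfolding norm_shrink by (intro tendsto_intros \<beta>)
  then show "norm \<alpha> = 1" using tendsto_norm[OF \<alpha>] LIMSEQ_unique by force
  assume "0 < c"
  show "c *\<^sub>R \<alpha> \<in> dAinf g h p x"
  proof (rule dAinf_subseqI[OF assms(1-3)])
    show "0 < c * inverse (1 + norm (Ts j))" for j
      using \<open>0 < c\<close> inverse_one_plus_norm(1) by (rule mult_pos_pos)
    show "(\<lambda>j. c * inverse (1 + norm (Ts j))) \<longlonglongrightarrow> 0"
      using tendsto_mult[OF tendsto_const \<beta>, of c] by simp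
    show "(\<lambda>j. (c * inverse (1 + norm (Ts j))) *\<^sub>R Ts j) \<longlonglongrightarrow> c *\<^sub>R \<alpha>"
      using tendsto_scaleR[OF tendsto_const \<alpha>, of c] by (simp add: shrink_def)
  qed
qed

lemma dcsub_bounded_limit:
  fixes Ts :: "nat \<Rightarrow> 'a::real_inner"
  assumes "strict_mono \<kappa>" and "xs \<longlonglongrightarrow> x" and "\<And>j. Ts j \<in> dcsub g h (\<kappa> j) p (xs j)"
    and \<alpha>: "(\<lambda>j. shrink (Ts j)) \<longlonglongrightarrow> \<alpha>" and \<beta>: "(\<lambda>j. inverse (1 + norm (Ts j))) \<longlonglongrightarrow> \<beta>"
    and "\<beta> \<noteq> 0"
  shows "Ts \<longlonglongrightarrow> \<alpha> /\<^sub>R \<beta>" and "\<alpha> /\<^sub>R \<beta> \<in> dA g h p x"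
proof -
  have "(\<lambda>j. inverse (inverse (1 + norm (Ts j))) *\<^sub>R shrink (Ts j)) \<longlonglongrightarrow> \<alpha> /\<^sub>R \<beta>"
    by (intro tendsto_intros \<alpha> \<beta> \<open>\<beta> \<noteq> 0\<close>)
  moreover have "inverse (inverse (1 + norm (Ts j))) *\<^sub>R shrink (Ts j) = Ts j" for j
    using inverse_one_plus_norm(1)[of "Ts j"] by (simp add: shrink_def)
  ultimately show T: "Ts \<longlonglongrightarrow> \<alpha> /\<^sub>R \<beta>" by simp
  show "\<alpha> /\<^sub>R \<beta> \<in> dA g h p x" by (rule dA_subseqI[OF assms(1-3) T])
qed

lemma scaled_horizon_limit:
  fixes U Ut :: "nat \<Rightarrow> 'a::real_normed_vector" and q :: "nat \<Rightarrow> real"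
  assumes q_nonneg: "\<And>j. 0 \<le> q j" and q: "q \<longlonglongrightarrow> \<eta>" and qU: "\<And>j. q j * norm (U j) \<le> 1"
    and near: "\<And>j. norm (Ut j - U j) \<le> D"
    and \<alpha>: "(\<lambda>j. shrink (Ut j)) \<longlonglongrightarrow> \<alpha>" and \<beta>: "(\<lambda>j. inverse (1 + norm (Ut j))) \<longlonglongrightarrow> 0"
    and \<omega>: "(\<lambda>j. q j *\<^sub>R U j) \<longlonglongrightarrow> \<omega>"
  shows "\<eta> = 0" and "\<omega> = norm \<omega> *\<^sub>R \<alpha>"
proof -
  have D: "0 \<le> D" using near[of 0] norm_ge_zero order_trans by blast
  define c where "c j = q j * (1 + norm (Ut j))" for j
  have c_nonneg: "0 \<le> c j" for j unfolding c_def using q_nonneg[of j] by simp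
  have "eventually (\<lambda>j. q j < \<bar>\<eta>\<bar> + 1) sequentially"
    by (rule order_tendstoD(2)[OF q]) simp
  then have c_bdd: "eventually (\<lambda>j. norm (c j) \<le> (\<bar>\<eta>\<bar> + 1) * (1 + D) + 1) sequentially"
  proof eventually_elim
    case (elim j)
    have "norm (Ut j) \<le> norm (U j) + D"
      using norm_triangle_ineq2[of "Ut j" "U j"] near[of j] by simp
    then have "q j * norm (Ut j) \<le> q j * (norm (U j) + D)"
      using q_nonneg[of j] by (rule mult_left_mono)
    then have "c j \<le> q j * (1 + D) + q j * norm (U j)"
      unfolding c_def by (simp add: algebra_simps)
    also have "\<dots> \<le> (\<bar>\<eta>\<bar> + 1) * (1 + D) + 1"
      using elim qU[of j] D by (intro add_mono mult_right_mono) auto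
    finally show ?case using c_nonneg[of j] by simp
  qed
  have q_eq: "q j = inverse (1 + norm (Ut j)) * c j" for j
    unfolding c_def using inverse_one_plus_norm(1)[of "Ut j"] by simp
  have q0: "q \<longlonglongrightarrow> 0"
    using tendsto_zero_scaleR_bounded[OF \<beta> c_bdd] by (simp add: q_eq[abs_def])
  then show "\<eta> = 0" using LIMSEQ_unique[OF q] by simp
  have "(\<lambda>j. q j *\<^sub>R (U j - Ut j)) \<longlonglongrightarrow> 0"
    using near by (intro tendsto_zero_scaleR_bounded[OF q0, of _ D] always_eventually)
      (simp add: norm_minus_commute)
  from tendsto_diff[OF \<omega> this] have "(\<lambda>j. q j *\<^sub>R Ut j) \<longlonglongrightarrow> \<omega>"
    by (simp add: scaleR_diff_right)
  moreover have "c j *\<^sub>R shrink (Ut j) = q j *\<^sub>R Ut j" for j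
    using inverse_one_plus_norm(1)[of "Ut j"] by (simp add: c_def shrink_def)
  ultimately have c\<alpha>: "(\<lambda>j. c j *\<^sub>R shrink (Ut j)) \<longlonglongrightarrow> \<omega>" by simp
  have n1: "(\<lambda>j. norm (shrink (Ut j))) \<longlonglongrightarrow> 1"
    using tendsto_diff[OF tendsto_const \<beta>, of 1] by (simp add: norm_shrink)
  have "(\<lambda>j. norm (c j *\<^sub>R shrink (Ut j)) / norm (shrink (Ut j))) \<longlonglongrightarrow> norm \<omega>"
    using tendsto_divide[OF tendsto_norm[OF c\<alpha>] n1] by simp
  moreover have "eventually (\<lambda>j. norm (c j *\<^sub>R shrink (Ut j)) / norm (shrink (Ut j)) = c j) sequentially"
    using tendsto_imp_eventually_ne[OF n1 one_neq_zero] by eventually_elim (simp add: c_nonneg)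
  ultimately have "c \<longlonglongrightarrow> norm \<omega>" by (rule Lim_transform_eventually)
  then have "(\<lambda>j. c j *\<^sub>R shrink (Ut j)) \<longlonglongrightarrow> norm \<omega> *\<^sub>R \<alpha>" using \<alpha> by (rule tendsto_scaleR)
  then show "\<omega> = norm \<omega> *\<^sub>R \<alpha>" by (rule LIMSEQ_unique[OF c\<alpha>])
qed

definition kkt_term :: "(nat \<Rightarrow> real) \<times> (nat \<Rightarrow> real) \<Rightarrow> (nat \<Rightarrow> 'a::real_vector) \<Rightarrow> (nat \<Rightarrow> 'a) \<Rightarrow> nat \<Rightarrow> 'a"
  where "kkt_term y u v p = fst y p *\<^sub>R u p + snd y p *\<^sub>R v p"

lemma norm_kkt_term_le:
  fixes u v :: "nat \<Rightarrow> 'a::real_normed_vector"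
  assumes "norm (u p) \<le> R" and "norm (v p) \<le> R"
  shows "norm (kkt_term y u v p) \<le> (\<bar>fst y p\<bar> + \<bar>snd y p\<bar>) * R"
proof -
  have "norm (kkt_term y u v p) \<le> \<bar>fst y p\<bar> * norm (u p) + \<bar>snd y p\<bar> * norm (v p)"
    unfolding kkt_term_def by (metis norm_scaleR norm_triangle_ineq)
  also have "\<dots> \<le> \<bar>fst y p\<bar> * R + \<bar>snd y p\<bar> * R"
    using assms by (intro add_mono mult_left_mono) auto
  finally show ?thesis by (simp add: distrib_right)
qed

text \<open>Data of the last subproblem solved in outer iteration k: its centre
  ctr k = x^{k,i_k}, its solution sol k = x^{k,i_k+1}, and the subgradients a k p of h_p^k and
  b k p of g_p^k chosen at the centre.\<close>
locale adc_outer_steps =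
  fixes m m1 :: nat
    and phi :: "nat \<Rightarrow> real \<Rightarrow> real"
    and f :: "nat \<Rightarrow> 'a::euclidean_space \<Rightarrow> real"
    and g h :: "nat \<Rightarrow> nat \<Rightarrow> 'a \<Rightarrow> real"
    and ahat :: "nat \<Rightarrow> nat \<Rightarrow> real"
    and ell eps del :: "nat \<Rightarrow> real"
    and lam :: real
    and ctr sol :: "nat \<Rightarrow> 'a"
    and a b :: "nat \<Rightarrow> nat \<Rightarrow> 'a"
  assumes m1_le: "m1 \<le> m"
    and phi_convex: "\<And>p. p \<in> {1..m1} \<Longrightarrow> convex_on UNIV (phi p)"
    and g_convex: "\<And>k p. p \<in> {1..m} \<Longrightarrow> convex_on UNIV (g k p)"
    and h_convex: "\<And>k p. p \<in> {1..m} \<Longrightarrow> convex_on UNIV (h k p)"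
    and f_epi: "\<And>p. p \<in> {1..m} \<Longrightarrow> epi_conv (\<lambda>k z. ereal (dcf g h k p z)) (\<lambda>z. ereal (f p z))"
    and f_liminf: "\<And>p z. p \<in> {1..m} \<Longrightarrow>
        - \<infinity> < Liminf (nhds z \<times>\<^sub>F sequentially) (\<lambda>(z', k). ereal (dcf g h k p z'))"
    and f_limsup: "\<And>p z. p \<in> {1..m} \<Longrightarrow>
        Limsup (nhds z \<times>\<^sub>F sequentially) (\<lambda>(z', k). ereal (dcf g h k p z')) < \<infinity>"
    and ahat_nonneg: "\<And>k p. p \<in> {1..m} \<Longrightarrow> 0 \<le> ahat k p"
    and ahat_summable: "\<And>p. p \<in> {m1<..m} \<Longrightarrow> summable (\<lambda>k. ahat k p)"
    and ahat_zero: "\<And>k p. p \<in> {1..m1} \<Longrightarrow> ahat k p = 0"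
    and ell_pos: "\<And>k. 0 < ell k"
    and lipschitz_sub: "\<And>k p z z'. p \<in> {1..m} \<Longrightarrow>
        min (hausd (csubdiff (g k p) z) (csubdiff (g k p) z'))
            (hausd (csubdiff (h k p) z) (csubdiff (h k p) z')) \<le> ereal (ell k * norm (z - z'))"
    and CQ: "\<And>z y v. z \<in> (\<Inter>p\<in>{1..m}. domF m1 phi f p) \<Longrightarrow> (\<Sum>p\<in>{1..m}. y p *\<^sub>R v p) = 0 \<Longrightarrow>
        (\<And>p. p \<in> {1..m} \<Longrightarrow>
           (y p \<in> (\<Union>t\<in>Tset (dcf g h) p z. ncone1 {s. Phi m1 phi p s \<noteq> \<infinity>} t) \<and>
            v p \<in> convex hull (dA g h p z)) \<or> v p \<in> dAinf g h p z - {0}) \<Longrightarrow>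
        \<forall>p\<in>{1..m}. y p = 0"
    and lam_pos: "0 < lam"
    and eps_mono: "antimono eps" and eps_lim: "eps \<longlonglongrightarrow> 0"
    and del_pos: "\<And>k. 0 < del k" and del_mono: "antimono del" and del_lim: "del \<longlonglongrightarrow> 0"
    and delell_lim: "(\<lambda>k. del k / (lam + ell k)) \<longlonglongrightarrow> 0"
    and subgrad_ctr: "\<And>k p. p \<in> {1..m} \<Longrightarrow>
        a k p \<in> csubdiff (h k p) (ctr k) \<and> b k p \<in> csubdiff (g k p) (ctr k)"
    and sol_subsol: "\<And>k. subsol m m1 phi g h ahat lam k (a k) (b k) (ctr k) (sol k)"
    and sol_stoptest: "\<And>k. stoptest m m1 phi g h ahat lam eps del ell k (a k) (b k) (ctr k) (sol k)"
    and CQ_sub: "\<And>k y v. (\<And>p. p \<in> {m1<..m} \<Longrightarrow>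
           y p \<in> ncone1 {..0} (fup g h ahat (a k) k p (ctr k) (sol k)) \<and>
           v p \<in> csubdiff (fup g h ahat (a k) k p (ctr k)) (sol k)) \<Longrightarrow>
        (\<Sum>p\<in>{m1<..m}. y p *\<^sub>R v p) = 0 \<Longrightarrow> \<forall>p\<in>{m1<..m}. y p = 0"
begin

abbreviation "fU k p \<equiv> fup g h ahat (a k) k p (ctr k) (sol k)"
abbreviation "fL k p \<equiv> flo g h (b k) k p (ctr k) (sol k)"
abbreviation "fv k p \<equiv> dcf g h k p (sol k)"
abbreviation "Y k \<equiv> Yset m m1 phi lam (\<lambda>p. fup g h ahat (a k) k p (ctr k))
                      (\<lambda>p. flo g h (b k) k p (ctr k)) (sol k) (ctr k)"

definition certifies :: "nat \<Rightarrow> (nat \<Rightarrow> real) \<times> (nat \<Rightarrow> real) \<Rightarrow> (nat \<Rightarrow> 'a) \<Rightarrow> (nat \<Rightarrow> 'a) \<Rightarrow> bool"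
  where "certifies k y u v \<longleftrightarrow>
    (\<forall>p\<in>{1..m}. u p \<in> csubdiff (fup g h ahat (a k) k p (ctr k)) (sol k) \<and>
                v p \<in> csupdiff (flo g h (b k) k p (ctr k)) (sol k)) \<and>
    (\<Sum>p\<in>{1..m}. kkt_term y u v p) + lam *\<^sub>R (sol k - ctr k) = 0"

definition constr_mass :: "(nat \<Rightarrow> real) \<times> (nat \<Rightarrow> real) \<Rightarrow> real"
  where "constr_mass y = (\<Sum>p\<in>{m1<..m}. fst y p)"

definition kkt_scale :: "(nat \<Rightarrow> real) \<times> (nat \<Rightarrow> real) \<Rightarrow> (nat \<Rightarrow> 'a) \<Rightarrow> (nat \<Rightarrow> 'a) \<Rightarrow> real"
  where "kkt_scale y u v = 1 + constr_mass y + (\<Sum>p\<in>{1..m}. norm (kkt_term y u v p))"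

lemma Y_esubdiff1:
  assumes "y \<in> Y k" and "p \<in> {1..m}"
  shows "fst y p \<in> esubdiff1 (dec_up (Phi m1 phi p)) (fU k p)"
    and "snd y p \<in> esubdiff1 (dec_dn (Phi m1 phi p)) (fL k p)"
  using assms by (cases y; simp add: Yset_def)+

lemma Y_certificate: "y \<in> Y k \<Longrightarrow> \<exists>u v. certifies k y u v"
  by (cases y) (simp add: Yset_def certifies_def kkt_term_def)

lemma Y_monotone_part:
  assumes "y \<in> Y k" and "p \<in> {1..m}" and "p \<notin> I2 m m1 phi"
  shows "0 \<le> fst y p" and "snd y p = 0"
proof -
  have mono: "mono (Phi m1 phi p)" by (rule mono_Phi_notin_I2[OF assms(2,3)])
  show "0 \<le> fst y p"
    using Y_esubdiff1(1)[OF assms(1,2)] esubdiff1_mono_nonneg[OF mono] by (simp add: dec_up_mono[OF mono])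
  show "snd y p = 0"
    using Y_esubdiff1(2)[OF assms(1,2)] esubdiff1_zero by (simp add: dec_dn_mono[OF mono])
qed

lemma Y_constraint_part:
  assumes "y \<in> Y k" and "p \<in> {m1<..m}"
  shows "0 \<le> fst y p" and "snd y p = 0" and "0 < fst y p \<Longrightarrow> fU k p = 0"
proof -
  have "p \<in> {1..m}" "p \<notin> I2 m m1 phi" using assms(2) I2_subset[of m m1 phi] by auto
  then show "0 \<le> fst y p" and "snd y p = 0" using Y_monotone_part[OF assms(1)] by blast+
  show "0 < fst y p \<Longrightarrow> fU k p = 0"
    using esubdiff1_Phi_constraint(3)[OF _ Y_esubdiff1(1)[OF assms(1) \<open>p \<in> {1..m}\<close>]] assms(2)
    by simp
qed

lemma constr_mass_nonneg:
  assumes "y \<in> Y k"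
  shows "0 \<le> constr_mass y"
  unfolding constr_mass_def by (rule sum_nonneg) (use Y_constraint_part(1)[OF assms] in auto)

lemma fst_le_constr_mass:
  assumes "y \<in> Y k" and "p \<in> {m1<..m}"
  shows "fst y p \<le> constr_mass y"
  unfolding constr_mass_def using assms Y_constraint_part(1)
  by (intro member_le_sum) auto

lemma sum_objective_constraint:
  "(\<Sum>p\<in>{1..m}. F p) = (\<Sum>p\<in>{1..m1}. F p) + (\<Sum>p\<in>{m1<..m}. F p)"
proof -
  have "{1..m} = {1..m1} \<union> {m1<..m}" using m1_le by auto
  moreover have "{1..m1} \<inter> {m1<..m} = {}" by auto
  ultimately show ?thesis by (simp add: sum.union_disjoint)
qed

lemma ynorm_le_constr_mass:
  assumes "y \<in> Y k" and "\<And>p. p \<in> {1..m1} \<Longrightarrow> \<bar>fst y p\<bar> + \<bar>snd y p\<bar> \<le> M"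
  shows "ynorm m y \<le> real m1 * M + constr_mass y"
proof -
  have "ynorm m y \<le> (\<Sum>p\<in>{1..m}. \<bar>fst y p\<bar> + \<bar>snd y p\<bar>)" by (rule ynorm_le_sum_abs)
  also have "\<dots> = (\<Sum>p\<in>{1..m1}. \<bar>fst y p\<bar> + \<bar>snd y p\<bar>) + (\<Sum>p\<in>{m1<..m}. \<bar>fst y p\<bar> + \<bar>snd y p\<bar>)"
    by (rule sum_objective_constraint)
  also have "(\<Sum>p\<in>{m1<..m}. \<bar>fst y p\<bar> + \<bar>snd y p\<bar>) = constr_mass y"
    unfolding constr_mass_def using Y_constraint_part[OF assms(1)] by (intro sum.cong) auto
  also have "(\<Sum>p\<in>{1..m1}. \<bar>fst y p\<bar> + \<bar>snd y p\<bar>) \<le> real m1 * M"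
    using sum_mono[of "{1..m1}", OF assms(2)] by simp
  finally show ?thesis by simp
qed

lemma sigma_objective: "p \<in> {1..m1} \<Longrightarrow> sigma ahat k p = 0"
  by (simp add: sigma_def ahat_zero)

lemma sigma_constraint_nonneg: "p \<in> {m1<..m} \<Longrightarrow> 0 \<le> sigma ahat k p"
  using sigma_nonneg[OF ahat_summable] ahat_nonneg by simp

lemma fU_nonpos: "p \<in> {m1<..m} \<Longrightarrow> fU k p \<le> 0"
  using sol_subsol[of k] by (simp add: subsol_def)

lemma fU_bounds:
  assumes "p \<in> {1..m}"
  shows "fv k p + sigma ahat k p \<le> fU k p" and "fU k p \<le> fv k p + sigma ahat k p + eps k"
proof -
  show "fv k p + sigma ahat k p \<le> fU k p" by (rule dcf_le_fup) (use subgrad_ctr[OF assms] in blast)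
  show "fU k p \<le> fv k p + sigma ahat k p + eps k"
    using sol_stoptest[of k] assms by (simp add: stoptest_def)
qed

lemma fL_upper: "p \<in> {1..m} \<Longrightarrow> fL k p \<le> fv k p"
  by (rule flo_le_dcf) (use subgrad_ctr in blast)

lemma fL_lower: "p \<in> I2 m m1 phi \<Longrightarrow> fv k p - eps k \<le> fL k p"
  using sol_stoptest[of k] by (simp add: stoptest_def)

lemma fv_nonpos:
  assumes "p \<in> {m1<..m}"
  shows "fv k p \<le> 0"
proof -
  have "p \<in> {1..m}" using assms by simp
  then show ?thesis
    using fU_nonpos[OF assms, of k] fU_bounds(1)[of p k] sigma_constraint_nonneg[OF assms, of k] by linarith
qed

lemma ell_step_le_del: "ell k * norm (sol k - ctr k) \<le> del k"
proof -
  have "0 < lam + ell k" using lam_pos ell_pos[of k] by simp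
  have "norm (sol k - ctr k) \<le> del k / (lam + ell k)"
    using sol_stoptest[of k] by (simp add: stoptest_def)
  then have "ell k * norm (sol k - ctr k) \<le> ell k * (del k / (lam + ell k))"
    by (rule mult_left_mono) (use ell_pos[of k] in simp)
  also have "\<dots> \<le> del k"
    using \<open>0 < lam + ell k\<close> lam_pos del_pos[of k] by (simp add: field_simps mult_left_mono)
  finally show ?thesis .
qed

lemma certificate_subgradients:
  assumes "certifies k y u v" and "p \<in> {1..m}"
  shows "u p + a k p \<in> csubdiff (g k p) (sol k)" and "b k p - v p \<in> csubdiff (h k p) (sol k)"
proof -
  have u: "u p \<in> csubdiff (fup g h ahat (a k) k p (ctr k)) (sol k)"
    and v: "v p \<in> csupdiff (flo g h (b k) k p (ctr k)) (sol k)"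
    using assms by (auto simp: certifies_def)
  show "u p + a k p \<in> csubdiff (g k p) (sol k)" by (rule csubdiff_fup_imp[OF u])
  show "b k p - v p \<in> csubdiff (h k p) (sol k)" by (rule csupdiff_flo_imp[OF v])
qed

lemma certificate_near_dcsub:
  assumes cert: "certifies k y u v" and p: "p \<in> {1..m}"
  shows "\<exists>w. (\<exists>\<zeta>\<in>{sol k, ctr k}. w \<in> dcsub g h k p \<zeta>) \<and> norm (w - u p) \<le> del k"
    and "\<exists>w. (\<exists>\<zeta>\<in>{sol k, ctr k}. w \<in> dcsub g h k p \<zeta>) \<and> norm (w - v p) \<le> del k"
proof -
  note g_sol = certificate_subgradients(1)[OF cert p] and h_sol = certificate_subgradients(2)[OF cert p]
  have h_ctr: "a k p \<in> csubdiff (h k p) (ctr k)" and g_ctr: "b k p \<in> csubdiff (g k p) (ctr k)"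
    using subgrad_ctr[OF p] by auto
  have "\<exists>\<zeta>\<in>{sol k, ctr k}. \<exists>w\<in>dcsub g h k p \<zeta>. norm (w - ((u p + a k p) - a k p)) \<le> ell k * norm (sol k - ctr k)"
    unfolding dcsub_def using g_ctr h_sol lipschitz_sub[OF p]
    by (intro hausd_approx_dcsub[OF g_sol h_ctr]) auto
  then show "\<exists>w. (\<exists>\<zeta>\<in>{sol k, ctr k}. w \<in> dcsub g h k p \<zeta>) \<and> norm (w - u p) \<le> del k"
    using ell_step_le_del[of k] by force
  have "\<exists>\<zeta>\<in>{ctr k, sol k}. \<exists>w\<in>dcsub g h k p \<zeta>. norm (w - (b k p - (b k p - v p))) \<le> ell k * norm (ctr k - sol k)"
    unfolding dcsub_def using g_sol h_ctr lipschitz_sub[OF p]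
    by (intro hausd_approx_dcsub[OF g_ctr h_sol]) auto
  then show "\<exists>w. (\<exists>\<zeta>\<in>{sol k, ctr k}. w \<in> dcsub g h k p \<zeta>) \<and> norm (w - v p) \<le> del k"
    using ell_step_le_del[of k] by (force simp: norm_minus_commute)
qed

lemma certificate_bounded: "\<exists>R. \<forall>y u v p. certifies k y u v \<longrightarrow> p \<in> {1..m} \<longrightarrow> norm (u p) \<le> R \<and> norm (v p) \<le> R"
proof -
  have "bounded (\<Union>p\<in>{1..m}. csubdiff (g k p) (sol k) \<union> csubdiff (h k p) (sol k) \<union> {a k p, b k p})"
    by (rule bounded_UN) (simp_all add: bounded_Un bounded_csubdiff g_convex h_convex)
  then obtain R where R: "\<And>p x. p \<in> {1..m} \<Longrightarrow>
      x \<in> csubdiff (g k p) (sol k) \<union> csubdiff (h k p) (sol k) \<union> {a k p, b k p} \<Longrightarrow> norm x \<le> R"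
    unfolding bounded_iff by blast
  have "norm (u p) \<le> 2 * R \<and> norm (v p) \<le> 2 * R" if "certifies k y u v" "p \<in> {1..m}" for y u v p
  proof -
    have "u p + a k p \<in> csubdiff (g k p) (sol k)" and "b k p - v p \<in> csubdiff (h k p) (sol k)"
      using certificate_subgradients[OF that] by auto
    then have "norm (u p + a k p) \<le> R" "norm (b k p - v p) \<le> R" "norm (a k p) \<le> R" "norm (b k p) \<le> R"
      using R[OF that(2)] by auto
    then show ?thesis using norm_triangle_ineq4[of "u p + a k p" "a k p"]
      norm_triangle_ineq4[of "b k p" "b k p - v p"] by auto
  qed
  then show ?thesis by blast
qed

lemma Y_objective_bounded_at: "\<exists>M. \<forall>y\<in>Y k. \<forall>p\<in>{1..m1}. \<bar>fst y p\<bar> + \<bar>snd y p\<bar> \<le> M"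
proof -
  have "\<exists>M. \<forall>y\<in>Y k. \<bar>fst y p\<bar> + \<bar>snd y p\<bar> \<le> M" if p: "p \<in> {1..m1}" for p
  proof -
    have pm: "p \<in> {1..m}" using p m1_le by simp
    have "\<exists>M\<ge>0. \<forall>t s. \<bar>t\<bar> \<le> T \<longrightarrow>
        (s \<in> esubdiff1 (dec_up (Phi m1 phi p)) t \<or> s \<in> esubdiff1 (dec_dn (Phi m1 phi p)) t) \<longrightarrow> \<bar>s\<bar> \<le> M"
      for T using dec_esubdiff1_bounded[OF phi_convex[OF p]] p by (simp add: Phi_objective)
    then obtain M where M: "\<forall>t s. \<bar>t\<bar> \<le> \<bar>fU k p\<bar> + \<bar>fL k p\<bar> \<longrightarrow>
        (s \<in> esubdiff1 (dec_up (Phi m1 phi p)) t \<or> s \<in> esubdiff1 (dec_dn (Phi m1 phi p)) t) \<longrightarrow> \<bar>s\<bar> \<le> M"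
      by blast
    have fst_le: "\<bar>fst y p\<bar> \<le> M" and snd_le: "\<bar>snd y p\<bar> \<le> M" if "y \<in> Y k" for y
      using M[rule_format, of "fU k p" "fst y p"] M[rule_format, of "fL k p" "snd y p"]
        Y_esubdiff1[OF that pm] by auto
    have "\<bar>fst y p\<bar> + \<bar>snd y p\<bar> \<le> M + M" if "y \<in> Y k" for y
      using fst_le[OF that] snd_le[OF that] by (rule add_mono)
    then show ?thesis by blast
  qed
  then obtain M where "\<And>p. p \<in> {1..m1} \<Longrightarrow> \<forall>y\<in>Y k. \<bar>fst y p\<bar> + \<bar>snd y p\<bar> \<le> M p"
    by metis
  then have "\<forall>y\<in>Y k. \<forall>p\<in>{1..m1}. \<bar>fst y p\<bar> + \<bar>snd y p\<bar> \<le> Max (M ` {1..m1})"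
    by (meson Max_ge finite_atLeastAtMost finite_imageI image_eqI order_trans)
  then show ?thesis by blast
qed

end

context adc_outer_steps
begin

definition cert_u :: "nat \<Rightarrow> (nat \<Rightarrow> real) \<times> (nat \<Rightarrow> real) \<Rightarrow> nat \<Rightarrow> 'a"
  where "cert_u k y = fst (SOME uv. certifies k y (fst uv) (snd uv))"

definition cert_v :: "nat \<Rightarrow> (nat \<Rightarrow> real) \<times> (nat \<Rightarrow> real) \<Rightarrow> nat \<Rightarrow> 'a"
  where "cert_v k y = snd (SOME uv. certifies k y (fst uv) (snd uv))"

lemma certifies_cert: "y \<in> Y k \<Longrightarrow> certifies k y (cert_u k y) (cert_v k y)"
  using someI_ex[of "\<lambda>uv. certifies k y (fst uv) (snd uv)"] Y_certificate
  unfolding cert_u_def cert_v_def by fastforce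

definition dc_approx :: "nat \<Rightarrow> nat \<Rightarrow> 'a \<Rightarrow> 'a"
  where "dc_approx k p u = (SOME w. (\<exists>\<zeta>\<in>{sol k, ctr k}. w \<in> dcsub g h k p \<zeta>) \<and> norm (w - u) \<le> del k)"

lemma dc_approx_cert:
  assumes "y \<in> Y k" and "p \<in> {1..m}"
  shows "(\<exists>\<zeta>\<in>{sol k, ctr k}. dc_approx k p (cert_u k y p) \<in> dcsub g h k p \<zeta>)
      \<and> norm (dc_approx k p (cert_u k y p) - cert_u k y p) \<le> del k"
    and "(\<exists>\<zeta>\<in>{sol k, ctr k}. dc_approx k p (cert_v k y p) \<in> dcsub g h k p \<zeta>)
      \<and> norm (dc_approx k p (cert_v k y p) - cert_v k y p) \<le> del k"
  unfolding dc_approx_def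
  by (rule someI_ex[OF certificate_near_dcsub(1)[OF certifies_cert[OF assms(1)] assms(2)]],
      rule someI_ex[OF certificate_near_dcsub(2)[OF certifies_cert[OF assms(1)] assms(2)]])


lemma certificate_constraint_sum:
  assumes "y \<in> Y k" and "certifies k y u v"
  shows "(\<Sum>p\<in>{m1<..m}. fst y p *\<^sub>R u p) = - ((\<Sum>p\<in>{1..m1}. kkt_term y u v p) + lam *\<^sub>R (sol k - ctr k))"
proof -
  have "(\<Sum>p\<in>{m1<..m}. kkt_term y u v p) = (\<Sum>p\<in>{m1<..m}. fst y p *\<^sub>R u p)"
    using Y_constraint_part(2)[OF assms(1)] by (intro sum.cong) (auto simp: kkt_term_def)
  moreover have "(\<Sum>p\<in>{1..m1}. kkt_term y u v p) + (\<Sum>p\<in>{m1<..m}. kkt_term y u v p)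
      + lam *\<^sub>R (sol k - ctr k) = 0"
    using assms(2) sum_objective_constraint[of "kkt_term y u v"] by (simp add: certifies_def)
  ultimately show ?thesis by (simp add: algebra_simps eq_neg_iff_add_eq_0)
qed

lemma certificate_rest_bounded:
  "\<exists>B. \<forall>y\<in>Y k. norm ((\<Sum>p\<in>{1..m1}. kkt_term y (cert_u k y) (cert_v k y) p) + lam *\<^sub>R (sol k - ctr k)) \<le> B"
proof -
  obtain M where M: "\<And>y p. y \<in> Y k \<Longrightarrow> p \<in> {1..m1} \<Longrightarrow> \<bar>fst y p\<bar> + \<bar>snd y p\<bar> \<le> M"
    using Y_objective_bounded_at by blast
  obtain R where R: "\<And>y u v p. certifies k y u v \<Longrightarrow> p \<in> {1..m} \<Longrightarrow> norm (u p) \<le> R \<and> norm (v p) \<le> R"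
    using certificate_bounded by blast
  have term_bdd: "norm (kkt_term y (cert_u k y) (cert_v k y) p) \<le> M * R" if "y \<in> Y k" "p \<in> {1..m1}" for y p
  proof -
    have p: "p \<in> {1..m}" using that(2) m1_le by simp
    note uv = R[OF certifies_cert[OF that(1)] p]
    then have "0 \<le> R" using norm_ge_zero order_trans by blast
    have "norm (kkt_term y (cert_u k y) (cert_v k y) p) \<le> (\<bar>fst y p\<bar> + \<bar>snd y p\<bar>) * R"
      using uv by (intro norm_kkt_term_le) auto
    also have "\<dots> \<le> M * R" using M[OF that] \<open>0 \<le> R\<close> by (rule mult_right_mono)
    finally show ?thesis .
  qed
  have "norm ((\<Sum>p\<in>{1..m1}. kkt_term y (cert_u k y) (cert_v k y) p) + lam *\<^sub>R (sol k - ctr k))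
      \<le> real m1 * (M * R) + norm (lam *\<^sub>R (sol k - ctr k))" if "y \<in> Y k" for y
  proof -
    have "norm (\<Sum>p\<in>{1..m1}. kkt_term y (cert_u k y) (cert_v k y) p) \<le> (\<Sum>p\<in>{1..m1}. M * R)"
      by (rule sum_norm_le) (rule term_bdd[OF that])
    moreover have "(\<Sum>p\<in>{1..m1}. M * R) = real m1 * (M * R)" by simp
    ultimately show ?thesis
      using norm_triangle_ineq[of "\<Sum>p\<in>{1..m1}. kkt_term y (cert_u k y) (cert_v k y) p"
          "lam *\<^sub>R (sol k - ctr k)"] by linarith
  qed
  then show ?thesis by blast
qed

lemma constraint_ratio_bounds:
  assumes "y \<in> Y k" and "p \<in> {m1<..m}"
  shows "0 \<le> fst y p / constr_mass y" and "fst y p / constr_mass y \<le> 1"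
  using Y_constraint_part(1)[OF assms] fst_le_constr_mass[OF assms] by (auto simp: divide_le_eq_1)

lemma constraint_sum_normalized_tendsto_zero:
  assumes ys: "\<And>j. ys j \<in> Y k" and large: "\<And>j. real j \<le> constr_mass (ys j)"
  shows "(\<lambda>j. \<Sum>p\<in>{m1<..m}. (fst (ys j) p / constr_mass (ys j)) *\<^sub>R cert_u k (ys j) p) \<longlonglongrightarrow> 0"
proof -
  define rest where "rest j = (\<Sum>p\<in>{1..m1}. kkt_term (ys j) (cert_u k (ys j)) (cert_v k (ys j)) p)
      + lam *\<^sub>R (sol k - ctr k)" for j
  have "(\<Sum>p\<in>{m1<..m}. (fst (ys j) p / constr_mass (ys j)) *\<^sub>R cert_u k (ys j) p)
      = (1 / constr_mass (ys j)) *\<^sub>R (\<Sum>p\<in>{m1<..m}. fst (ys j) p *\<^sub>R cert_u k (ys j) p)" for j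
    by (simp add: scaleR_sum_right divide_inverse_commute)
  also have "\<dots> j = (1 / constr_mass (ys j)) *\<^sub>R - rest j" for j
    using certificate_constraint_sum[OF ys certifies_cert[OF ys]] by (simp add: rest_def)
  finally have eq: "(\<Sum>p\<in>{m1<..m}. (fst (ys j) p / constr_mass (ys j)) *\<^sub>R cert_u k (ys j) p)
      = (1 / constr_mass (ys j)) *\<^sub>R - rest j" for j .
  obtain B where "\<And>j. norm (rest j) \<le> B"
    using certificate_rest_bounded ys unfolding rest_def by metis
  then show ?thesis
    unfolding eq
    by (intro tendsto_zero_scaleR_bounded[OF inverse_tendsto_zero_linear_growth[of 0]] always_eventually)
      (use large in auto)
qed

lemma constraint_multiplier_direction:
  assumes ys: "\<And>j. ys j \<in> Y k" and large: "\<And>j. real j \<le> constr_mass (ys j)"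
  obtains \<eta> u where "(\<Sum>p\<in>{m1<..m}. \<eta> p) = 1" and "(\<Sum>p\<in>{m1<..m}. \<eta> p *\<^sub>R u p) = 0"
    and "\<And>p. p \<in> {m1<..m} \<Longrightarrow>
      \<eta> p \<in> ncone1 {..0} (fU k p) \<and> u p \<in> csubdiff (fup g h ahat (a k) k p (ctr k)) (sol k)"
proof -
  define us where "us j = cert_u k (ys j)" for j
  define q where "q j p = fst (ys j) p / constr_mass (ys j)" for j p
  obtain R where R: "\<And>j p. p \<in> {1..m} \<Longrightarrow> norm (us j p) \<le> R"
    using certificate_bounded certifies_cert[OF ys] unfolding us_def by metis
  have "bounded (range (\<lambda>j. (q j p, us j p)))" if "p \<in> {m1<..m}" for p
  proof -
    have "norm (q j p, us j p) \<le> 1 + R" for j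
      using constraint_ratio_bounds[OF ys that, of j] R[of p j] that norm_Pair_le[of "q j p" "us j p"]
      by (auto simp: q_def)
    then show ?thesis by (auto simp: bounded_iff)
  qed
  then obtain r L where r: "strict_mono r"
    and L: "\<forall>p\<in>{m1<..m}. (\<lambda>j. (q (r j) p, us (r j) p)) \<longlonglongrightarrow> L p"
    using finite_common_convergent_subseq[of "{m1<..m}" "\<lambda>j p. (q j p, us j p)"] by auto
  have \<eta>: "(\<lambda>j. q (r j) p) \<longlonglongrightarrow> fst (L p)" and u: "(\<lambda>j. us (r j) p) \<longlonglongrightarrow> snd (L p)"
    if "p \<in> {m1<..m}" for p
    using tendsto_fst[OF L[rule_format, OF that]] tendsto_snd[OF L[rule_format, OF that]] by simp_all
  show thesis
  proof
    have "eventually (\<lambda>j. 1 \<le> j) sequentially" by (rule eventually_ge_at_top)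
    then have "eventually (\<lambda>j. (\<Sum>p\<in>{m1<..m}. q (r j) p) = 1) sequentially"
    proof eventually_elim
      case (elim j)
      have "(1::real) \<le> real (r j)" using seq_suble[OF r, of j] elim by simp
      then have "0 < constr_mass (ys (r j))" using large[of "r j"] by linarith
      then show ?case by (simp add: q_def constr_mass_def sum_divide_distrib[symmetric])
    qed
    then have "(\<lambda>j. \<Sum>p\<in>{m1<..m}. q (r j) p) \<longlonglongrightarrow> 1" by (rule tendsto_eventually)
    moreover have "(\<lambda>j. \<Sum>p\<in>{m1<..m}. q (r j) p) \<longlonglongrightarrow> (\<Sum>p\<in>{m1<..m}. fst (L p))"
      by (rule tendsto_sum) (rule \<eta>)
    ultimately show "(\<Sum>p\<in>{m1<..m}. fst (L p)) = 1" using LIMSEQ_unique by blast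
    show "(\<Sum>p\<in>{m1<..m}. fst (L p) *\<^sub>R snd (L p)) = 0"
      using LIMSEQ_subseq_LIMSEQ[OF constraint_sum_normalized_tendsto_zero[OF ys large] r]
      by (intro LIMSEQ_unique[OF tendsto_sum[OF tendsto_scaleR[OF \<eta> u]]]) (simp_all add: o_def q_def us_def)
    fix p assume p: "p \<in> {m1<..m}"
    have sub: "snd (L p) \<in> csubdiff (fup g h ahat (a k) k p (ctr k)) (sol k)"
      using certifies_cert[OF ys] p
      by (intro closed_sequentially[OF closed_csubdiff _ u[OF p]]) (auto simp: certifies_def us_def)
    have nonneg: "0 \<le> fst (L p)"
      using constraint_ratio_bounds(1)[OF ys p]
      by (intro tendsto_lowerbound[OF \<eta>[OF p]] always_eventually) (auto simp: q_def)
    have active: "fU k p = 0" if pos: "0 < fst (L p)"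
    proof -
      obtain j where "0 < q (r j) p"
        using order_tendstoD(1)[OF \<eta>[OF p] pos] by (auto simp: eventually_sequentially)
      then have "0 < fst (ys (r j)) p"
        using Y_constraint_part(1)[OF ys[of "r j"] p] by (auto simp: q_def zero_less_divide_iff)
      then show ?thesis using Y_constraint_part(3)[OF ys p] by blast
    qed
    show "fst (L p) \<in> ncone1 {..0} (fU k p) \<and> snd (L p) \<in> csubdiff (fup g h ahat (a k) k p (ctr k)) (sol k)"
      by (intro conjI ncone1_atMost_zeroI[OF fU_nonpos[OF p] nonneg active] sub)
  qed
qed

lemma constr_mass_bounded_at: "\<exists>B. \<forall>y\<in>Y k. constr_mass y \<le> B"
proof (rule ccontr)
  assume "\<nexists>B. \<forall>y\<in>Y k. constr_mass y \<le> B"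
  then have "\<forall>j::nat. \<exists>y\<in>Y k. real j \<le> constr_mass y" by (meson linorder_not_le less_imp_le)
  then obtain ys where ys: "\<And>j. ys j \<in> Y k" and large: "\<And>j. real j \<le> constr_mass (ys j)" by metis
  obtain \<eta> u where sum: "(\<Sum>p\<in>{m1<..m}. \<eta> p) = 1" and sum0: "(\<Sum>p\<in>{m1<..m}. \<eta> p *\<^sub>R u p) = 0"
    and dir: "\<And>p. p \<in> {m1<..m} \<Longrightarrow>
      \<eta> p \<in> ncone1 {..0} (fU k p) \<and> u p \<in> csubdiff (fup g h ahat (a k) k p (ctr k)) (sol k)"
    by (rule constraint_multiplier_direction[OF ys large]) blast
  have "\<forall>p\<in>{m1<..m}. \<eta> p = 0" by (rule CQ_sub[OF dir sum0])
  then show False using sum by simp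
qed

lemma Y_bounded_at: "\<exists>B. \<forall>y\<in>Y k. ynorm m y \<le> B"
proof -
  obtain M where "\<forall>y\<in>Y k. \<forall>p\<in>{1..m1}. \<bar>fst y p\<bar> + \<bar>snd y p\<bar> \<le> M"
    using Y_objective_bounded_at by blast
  moreover obtain B where "\<forall>y\<in>Y k. constr_mass y \<le> B" using constr_mass_bounded_at by blast
  ultimately have "ynorm m y \<le> real m1 * M + B" if "y \<in> Y k" for y
    using ynorm_le_constr_mass[OF that, of M] that by fastforce
  then show ?thesis by blast
qed

end

lemma bounded_range_Pair:
  assumes "bounded (range f)" and "bounded (range g)"
  shows "bounded (range (\<lambda>j. (f j, g j)))"
proof -
  have "range (\<lambda>j. (f j, g j)) \<subseteq> range f \<times> range g" by auto
  then show ?thesis using bounded_subset[OF bounded_Times[OF assms]] by blast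
qed

lemma tendsto_imp_norm_bounded:
  fixes X :: "nat \<Rightarrow> 'b::real_normed_vector"
  assumes "X \<longlonglongrightarrow> l"
  shows "\<exists>K. \<forall>n. norm (X n) \<le> K"
  using convergent_imp_Bseq[OF convergentI[OF assms]] by (auto simp: Bseq_def)

lemma eventually_norm_le_imp_bounded_range:
  fixes f :: "nat \<Rightarrow> 'b::real_normed_vector"
  assumes "eventually (\<lambda>j. norm (f j) \<le> B) sequentially"
  shows "bounded (range f)"
  using BfunI[OF assms] by (simp add: Bseq_eq_bounded)

context adc_outer_steps
begin

lemma kkt_scale_ge:
  assumes "y \<in> Y k"
  shows "1 \<le> kkt_scale y u v" and "constr_mass y \<le> kkt_scale y u v"
    and "p \<in> {1..m} \<Longrightarrow> norm (kkt_term y u v p) \<le> kkt_scale y u v"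
    and "p \<in> {m1<..m} \<Longrightarrow> fst y p \<le> kkt_scale y u v"
proof -
  have sums: "0 \<le> (\<Sum>p\<in>{1..m}. norm (kkt_term y u v p))" by (simp add: sum_nonneg)
  then show "1 \<le> kkt_scale y u v" and "constr_mass y \<le> kkt_scale y u v"
    using constr_mass_nonneg[OF assms] by (simp_all add: kkt_scale_def)
  show "norm (kkt_term y u v p) \<le> kkt_scale y u v" if "p \<in> {1..m}"
    using member_le_sum[OF that, of "\<lambda>p. norm (kkt_term y u v p)"] constr_mass_nonneg[OF assms]
    by (simp add: kkt_scale_def)
  show "fst y p \<le> kkt_scale y u v" if "p \<in> {m1<..m}"
    using fst_le_constr_mass[OF assms that] sums by (simp add: kkt_scale_def)
qed

end

locale adc_blowup = adc_outer_steps +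
  fixes \<kappa> :: "nat \<Rightarrow> nat" and xbar :: 'a and ys :: "nat \<Rightarrow> (nat \<Rightarrow> real) \<times> (nat \<Rightarrow> real)"
  assumes \<kappa>: "strict_mono \<kappa>"
    and ctr_lim: "(\<lambda>j. ctr (\<kappa> j)) \<longlonglongrightarrow> xbar"
    and ys_Y: "\<And>j. ys j \<in> Y (\<kappa> j)"
    and ys_large: "\<And>j. real j \<le> ynorm m (ys j)"
    and horizon_trivial: "\<And>p. xbar \<in> (\<Inter>p\<in>{1..m}. domF m1 phi f p) \<Longrightarrow> p \<in> I2 m m1 phi \<Longrightarrow>
        dAinf g h p xbar = {0}"
begin

abbreviation "us j \<equiv> cert_u (\<kappa> j) (ys j)"
abbreviation "vs j \<equiv> cert_v (\<kappa> j) (ys j)"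
abbreviation "ut j p \<equiv> dc_approx (\<kappa> j) p (us j p)"
abbreviation "vt j p \<equiv> dc_approx (\<kappa> j) p (vs j p)"
abbreviation "\<tau> j \<equiv> kkt_scale (ys j) (us j) (vs j)"
abbreviation "W j p \<equiv> kkt_term (ys j) (us j) (vs j) p"

lemma cert: "certifies (\<kappa> j) (ys j) (us j) (vs j)"
  by (rule certifies_cert[OF ys_Y])

lemmas ut_near = dc_approx_cert(1)[OF ys_Y] and vt_near = dc_approx_cert(2)[OF ys_Y]

lemma scale_pos: "0 < \<tau> j"
  using kkt_scale_ge(1)[OF ys_Y, of j "us j" "vs j"] by simp

lemma norm_W_scaled: "norm (W j p /\<^sub>R \<tau> j) = norm (W j p) / \<tau> j"
  using scale_pos[of j] by (simp add: divide_inverse_commute)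

lemma step_tendsto_zero: "(\<lambda>j. sol (\<kappa> j) - ctr (\<kappa> j)) \<longlonglongrightarrow> 0"
proof (rule Lim_null_comparison)
  show "(\<lambda>j. del (\<kappa> j) / (lam + ell (\<kappa> j))) \<longlonglongrightarrow> 0"
    using LIMSEQ_subseq_LIMSEQ[OF delell_lim \<kappa>] by (simp add: o_def)
  show "eventually (\<lambda>j. norm (sol (\<kappa> j) - ctr (\<kappa> j)) \<le> del (\<kappa> j) / (lam + ell (\<kappa> j))) sequentially"
    using sol_stoptest by (simp add: stoptest_def)
qed

lemma sol_lim: "(\<lambda>j. sol (\<kappa> j)) \<longlonglongrightarrow> xbar"
  using tendsto_add[OF ctr_lim step_tendsto_zero] by simp

lemma fv_bounded: "p \<in> {1..m} \<Longrightarrow> \<exists>c C. eventually (\<lambda>j. c \<le> fv (\<kappa> j) p \<and> fv (\<kappa> j) p \<le> C) sequentially"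
  by (rule eventually_bounded_joint_Liminf_Limsup[OF f_liminf f_limsup sol_lim \<kappa>])

lemma objective_values_bounded:
  assumes p: "p \<in> {1..m1}"
  shows "\<exists>T. eventually (\<lambda>j. \<bar>fU (\<kappa> j) p\<bar> \<le> T \<and> (p \<in> I2 m m1 phi \<longrightarrow> \<bar>fL (\<kappa> j) p\<bar> \<le> T)) sequentially"
proof -
  have pm: "p \<in> {1..m}" using p m1_le by simp
  obtain c C where "eventually (\<lambda>j. c \<le> fv (\<kappa> j) p \<and> fv (\<kappa> j) p \<le> C) sequentially"
    using fv_bounded[OF pm] by blast
  then have "eventually (\<lambda>j. \<bar>fU (\<kappa> j) p\<bar> \<le> \<bar>c\<bar> + \<bar>C\<bar> + \<bar>eps 0\<bar> \<and>
      (p \<in> I2 m m1 phi \<longrightarrow> \<bar>fL (\<kappa> j) p\<bar> \<le> \<bar>c\<bar> + \<bar>C\<bar> + \<bar>eps 0\<bar>)) sequentially"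
  proof eventually_elim
    case (elim j)
    have eps: "eps (\<kappa> j) \<le> eps 0" using eps_mono by (simp add: antimonoD)
    have T: "\<bar>t\<bar> \<le> \<bar>c\<bar> + \<bar>C\<bar> + \<bar>eps 0\<bar>" if "c - eps 0 \<le> t" "t \<le> C + eps 0" for t
      using that abs_ge_self[of c] abs_ge_minus_self[of c] abs_ge_self[of C] abs_ge_minus_self[of C]
        abs_ge_self[of "eps 0"] abs_ge_minus_self[of "eps 0"]
      unfolding abs_le_iff by linarith
    show ?case
      using fU_bounds[OF pm, of "\<kappa> j"] sigma_objective[OF p] fL_lower[of p "\<kappa> j"] fL_upper[OF pm, of "\<kappa> j"]
        elim eps by (intro conjI impI T) auto
  qed
  then show ?thesis by blast
qed

lemma objective_multipliers_bounded:
  "\<exists>M. eventually (\<lambda>j. \<forall>p\<in>{1..m1}. \<bar>fst (ys j) p\<bar> + \<bar>snd (ys j) p\<bar> \<le> M) sequentially"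
proof (rule eventually_bounded_finite)
  fix p assume p: "p \<in> {1..m1}"
  then have pm: "p \<in> {1..m}" using m1_le by simp
  obtain T where T: "eventually (\<lambda>j. \<bar>fU (\<kappa> j) p\<bar> \<le> T \<and> (p \<in> I2 m m1 phi \<longrightarrow> \<bar>fL (\<kappa> j) p\<bar> \<le> T)) sequentially"
    using objective_values_bounded[OF p] by blast
  have "\<exists>M\<ge>0. \<forall>t s. \<bar>t\<bar> \<le> T \<longrightarrow>
      (s \<in> esubdiff1 (dec_up (Phi m1 phi p)) t \<or> s \<in> esubdiff1 (dec_dn (Phi m1 phi p)) t) \<longrightarrow> \<bar>s\<bar> \<le> M"
    using dec_esubdiff1_bounded[OF phi_convex[OF p]] p by (simp add: Phi_objective)
  then obtain M where M: "0 \<le> M" "\<forall>t s. \<bar>t\<bar> \<le> T \<longrightarrow>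
      (s \<in> esubdiff1 (dec_up (Phi m1 phi p)) t \<or> s \<in> esubdiff1 (dec_dn (Phi m1 phi p)) t) \<longrightarrow> \<bar>s\<bar> \<le> M"
    by blast
  from T have "eventually (\<lambda>j. \<bar>fst (ys j) p\<bar> + \<bar>snd (ys j) p\<bar> \<le> M + M) sequentially"
  proof eventually_elim
    case (elim j)
    then have "\<bar>fst (ys j) p\<bar> \<le> M" using M(2) Y_esubdiff1(1)[OF ys_Y pm] by blast
    moreover have "\<bar>snd (ys j) p\<bar> \<le> M"
    proof (cases "p \<in> I2 m m1 phi")
      case True
      then show ?thesis using elim M(2) Y_esubdiff1(2)[OF ys_Y pm] by blast
    next
      case False
      then show ?thesis using Y_monotone_part(2)[OF ys_Y pm False] M(1) by simp
    qed
    ultimately show ?case by linarith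
  qed
  then show "\<exists>M. eventually (\<lambda>j. \<bar>fst (ys j) p\<bar> + \<bar>snd (ys j) p\<bar> \<le> M) sequentially" by blast
qed simp

lemma inverse_scale_tendsto_zero: "(\<lambda>j. 1 / \<tau> j) \<longlonglongrightarrow> 0"
proof -
  obtain M where M: "eventually (\<lambda>j. \<forall>p\<in>{1..m1}. \<bar>fst (ys j) p\<bar> + \<bar>snd (ys j) p\<bar> \<le> M) sequentially"
    using objective_multipliers_bounded by blast
  then have "eventually (\<lambda>j. real j - real m1 * M \<le> \<tau> j) sequentially"
  proof eventually_elim
    case (elim j)
    then have "ynorm m (ys j) \<le> real m1 * M + constr_mass (ys j)"
      by (intro ynorm_le_constr_mass[OF ys_Y]) auto
    then show ?case using ys_large[of j] kkt_scale_ge(2)[OF ys_Y, of j "us j" "vs j"] by linarith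
  qed
  then show ?thesis by (rule inverse_tendsto_zero_linear_growth)
qed

lemma near_dcsub_limit:
  assumes near: "\<And>j. (\<exists>\<zeta>\<in>{sol (\<kappa> j), ctr (\<kappa> j)}. Ts j \<in> dcsub g h (\<kappa> j) p \<zeta>) \<and> norm (Ts j - Us j) \<le> del (\<kappa> j)"
    and \<alpha>: "(\<lambda>j. shrink (Ts j)) \<longlonglongrightarrow> \<alpha>" and \<beta>: "(\<lambda>j. inverse (1 + norm (Ts j))) \<longlonglongrightarrow> \<beta>"
  shows "\<beta> = 0 \<Longrightarrow> norm \<alpha> = 1 \<and> (\<forall>c>0. c *\<^sub>R \<alpha> \<in> dAinf g h p xbar)"
    and "\<beta> \<noteq> 0 \<Longrightarrow> Us \<longlonglongrightarrow> \<alpha> /\<^sub>R \<beta> \<and> \<alpha> /\<^sub>R \<beta> \<in> dA g h p xbar"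
proof -
  have "\<forall>j. \<exists>\<zeta>. (\<zeta> = sol (\<kappa> j) \<or> \<zeta> = ctr (\<kappa> j)) \<and> Ts j \<in> dcsub g h (\<kappa> j) p \<zeta>"
    using near by blast
  then obtain Z where "\<forall>j. (Z j = sol (\<kappa> j) \<or> Z j = ctr (\<kappa> j)) \<and> Ts j \<in> dcsub g h (\<kappa> j) p (Z j)"
    by (rule choice[THEN exE])
  then have Z: "\<And>j. Z j = sol (\<kappa> j) \<or> Z j = ctr (\<kappa> j)" "\<And>j. Ts j \<in> dcsub g h (\<kappa> j) p (Z j)"
    by blast+
  have Z_lim: "Z \<longlonglongrightarrow> xbar" by (rule LIMSEQ_either[OF sol_lim ctr_lim Z(1)])
  show "\<beta> = 0 \<Longrightarrow> norm \<alpha> = 1 \<and> (\<forall>c>0. c *\<^sub>R \<alpha> \<in> dAinf g h p xbar)"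
    using dcsub_horizon_limit[OF \<kappa> Z_lim Z(2) \<alpha>] \<beta> by blast
  assume "\<beta> \<noteq> 0"
  have T: "Ts \<longlonglongrightarrow> \<alpha> /\<^sub>R \<beta>" and dA: "\<alpha> /\<^sub>R \<beta> \<in> dA g h p xbar"
    using dcsub_bounded_limit[OF \<kappa> Z_lim Z(2) \<alpha> \<beta> \<open>\<beta> \<noteq> 0\<close>] by blast+
  have "(\<lambda>j. Ts j - Us j) \<longlonglongrightarrow> 0"
  proof (rule Lim_null_comparison)
    show "eventually (\<lambda>j. norm (Ts j - Us j) \<le> del (\<kappa> j)) sequentially"
      using near by (intro always_eventually) blast
    show "(\<lambda>j. del (\<kappa> j)) \<longlonglongrightarrow> 0"
      using LIMSEQ_subseq_LIMSEQ[OF del_lim \<kappa>] by (simp add: o_def)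
  qed
  from tendsto_diff[OF T this] have "Us \<longlonglongrightarrow> \<alpha> /\<^sub>R \<beta>" by simp
  then show "Us \<longlonglongrightarrow> \<alpha> /\<^sub>R \<beta> \<and> \<alpha> /\<^sub>R \<beta> \<in> dA g h p xbar" using dA by blast
qed

end

locale adc_blowup_limits = adc_blowup +
  fixes \<omega> \<alpha> \<alpha>' :: "nat \<Rightarrow> 'a" and \<beta> \<beta>' \<eta> tt :: "nat \<Rightarrow> real"
  assumes \<omega>_lim: "\<And>p. p \<in> {1..m} \<Longrightarrow> (\<lambda>j. W j p /\<^sub>R \<tau> j) \<longlonglongrightarrow> \<omega> p"
    and \<alpha>_lim: "\<And>p. p \<in> {1..m} \<Longrightarrow> (\<lambda>j. shrink (ut j p)) \<longlonglongrightarrow> \<alpha> p"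
    and \<beta>_lim: "\<And>p. p \<in> {1..m} \<Longrightarrow> (\<lambda>j. inverse (1 + norm (ut j p))) \<longlonglongrightarrow> \<beta> p"
    and \<alpha>'_lim: "\<And>p. p \<in> {1..m} \<Longrightarrow> (\<lambda>j. shrink (vt j p)) \<longlonglongrightarrow> \<alpha>' p"
    and \<beta>'_lim: "\<And>p. p \<in> {1..m} \<Longrightarrow> (\<lambda>j. inverse (1 + norm (vt j p))) \<longlonglongrightarrow> \<beta>' p"
    and \<eta>_lim: "\<And>p. p \<in> {1..m} \<Longrightarrow> (\<lambda>j. fst (ys j) p / \<tau> j) \<longlonglongrightarrow> \<eta> p"
    and tt_lim: "\<And>p. p \<in> {1..m} \<Longrightarrow> (\<lambda>j. fv (\<kappa> j) p) \<longlonglongrightarrow> tt p"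
begin

lemma xbar_feasible: "xbar \<in> (\<Inter>p\<in>{1..m}. domF m1 phi f p)"
proof
  fix p assume p: "p \<in> {1..m}"
  show "xbar \<in> domF m1 phi f p"
  proof (cases "p \<le> m1")
    case False
    then have "ereal (f p xbar) \<le> 0"
      using fv_nonpos p by (intro epi_conv_le_zero_subseq[OF f_epi[OF p] \<kappa> sol_lim]) simp
    then show ?thesis using False by (simp add: domF_def Phi_def)
  qed (simp add: domF_def Phi_def)
qed

lemma tt_in_Tset: "p \<in> {1..m} \<Longrightarrow> tt p \<in> Tset (dcf g h) p xbar"
  by (rule Tset_subseqI[where fk = "dcf g h", OF \<kappa> sol_lim tt_lim])

lemma \<eta>_objective:
  assumes "p \<in> {1..m1}"
  shows "\<eta> p = 0"
proof -
  obtain M where "eventually (\<lambda>j. \<forall>p\<in>{1..m1}. \<bar>fst (ys j) p\<bar> + \<bar>snd (ys j) p\<bar> \<le> M) sequentially"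
    using objective_multipliers_bounded by blast
  then have "eventually (\<lambda>j. norm (fst (ys j) p) \<le> M) sequentially"
    by eventually_elim (use assms in force)
  from tendsto_zero_scaleR_bounded[OF inverse_scale_tendsto_zero this]
  have "(\<lambda>j. fst (ys j) p / \<tau> j) \<longlonglongrightarrow> 0" by simp
  then show ?thesis using \<eta>_lim assms m1_le LIMSEQ_unique by fastforce
qed

lemma \<eta>_constraint:
  assumes p: "p \<in> {m1<..m}"
  shows "\<eta> p \<in> ncone1 {..0} (tt p)"
proof (rule ncone1_atMost_zeroI)
  have pm: "p \<in> {1..m}" using p by simp
  show "tt p \<le> 0" using fv_nonpos[OF p] by (intro tendsto_upperbound[OF tt_lim[OF pm]]) auto
  show "0 \<le> \<eta> p"
    using Y_constraint_part(1)[OF ys_Y p] scale_pos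
    by (intro tendsto_lowerbound[OF \<eta>_lim[OF pm]] always_eventually allI divide_nonneg_pos) auto
  assume "0 < \<eta> p"
  then have "eventually (\<lambda>j. 0 < fst (ys j) p / \<tau> j) sequentially"
    by (rule order_tendstoD(1)[OF \<eta>_lim[OF pm]])
  then have active: "eventually (\<lambda>j. fU (\<kappa> j) p = 0) sequentially"
  proof eventually_elim
    case (elim j)
    then have "0 < fst (ys j) p" using scale_pos[of j] by (simp add: zero_less_divide_iff)
    then show ?case by (rule Y_constraint_part(3)[OF ys_Y p])
  qed
  have \<sigma>: "(\<lambda>j. sigma ahat (\<kappa> j) p) \<longlonglongrightarrow> 0"
    using LIMSEQ_subseq_LIMSEQ[OF sigma_tendsto_zero[of ahat p, OF ahat_summable[OF p]] \<kappa>] by (simp add: o_def)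
  have eps: "(\<lambda>j. eps (\<kappa> j)) \<longlonglongrightarrow> 0"
    using LIMSEQ_subseq_LIMSEQ[OF eps_lim \<kappa>] by (simp add: o_def)
  have "(\<lambda>j. fv (\<kappa> j) p) \<longlonglongrightarrow> 0"
  proof (rule tendsto_sandwich[of "\<lambda>j. - sigma ahat (\<kappa> j) p - eps (\<kappa> j)" _ _ "\<lambda>j. - sigma ahat (\<kappa> j) p"])
    show "eventually (\<lambda>j. - sigma ahat (\<kappa> j) p - eps (\<kappa> j) \<le> fv (\<kappa> j) p) sequentially"
      using active
    proof eventually_elim
      case (elim j)
      then show ?case using fU_bounds(2)[OF pm, of "\<kappa> j"] by linarith
    qed
    show "eventually (\<lambda>j. fv (\<kappa> j) p \<le> - sigma ahat (\<kappa> j) p) sequentially"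
      using active
    proof eventually_elim
      case (elim j)
      then show ?case using fU_bounds(1)[OF pm, of "\<kappa> j"] by linarith
    qed
    show "(\<lambda>j. - sigma ahat (\<kappa> j) p - eps (\<kappa> j)) \<longlonglongrightarrow> 0"
      using tendsto_diff[OF tendsto_minus[OF \<sigma>] eps] by simp
    show "(\<lambda>j. - sigma ahat (\<kappa> j) p) \<longlonglongrightarrow> 0" using tendsto_minus[OF \<sigma>] by simp
  qed
  then show "tt p = 0" using LIMSEQ_unique[OF tt_lim[OF pm]] by simp
qed

lemma \<eta>_ncone: "p \<in> {1..m} \<Longrightarrow> \<eta> p \<in> ncone1 {s. Phi m1 phi p s \<noteq> \<infinity>} (tt p)"
  using \<eta>_constraint \<eta>_objective zero_in_ncone1 dom_Phi_constraint
  by (cases "p \<le> m1") (auto simp: Phi_objective)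

lemma sum_\<omega>_eq_0: "(\<Sum>p\<in>{1..m}. \<omega> p) = 0"
proof (rule LIMSEQ_unique[OF tendsto_sum[OF \<omega>_lim]])
  have "(\<Sum>p\<in>{1..m}. W j p /\<^sub>R \<tau> j) = - ((1 / \<tau> j) *\<^sub>R (lam *\<^sub>R (sol (\<kappa> j) - ctr (\<kappa> j))))" for j
  proof -
    have "(\<Sum>p\<in>{1..m}. W j p) = - (lam *\<^sub>R (sol (\<kappa> j) - ctr (\<kappa> j)))"
      using cert[of j] by (simp add: certifies_def eq_neg_iff_add_eq_0)
    then show ?thesis by (simp add: scaleR_sum_right[symmetric] divide_inverse_commute)
  qed
  moreover have "(\<lambda>j. - ((1 / \<tau> j) *\<^sub>R (lam *\<^sub>R (sol (\<kappa> j) - ctr (\<kappa> j))))) \<longlonglongrightarrow> - (0 *\<^sub>R (lam *\<^sub>R 0))"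
    by (intro tendsto_intros inverse_scale_tendsto_zero step_tendsto_zero)
  ultimately show "(\<lambda>j. \<Sum>p\<in>{1..m}. W j p /\<^sub>R \<tau> j) \<longlonglongrightarrow> 0" by simp
qed

lemma normalization: "(\<Sum>p\<in>{m1<..m}. \<eta> p) + (\<Sum>p\<in>{1..m}. norm (\<omega> p)) = 1"
proof -
  have "1 / \<tau> j + (\<Sum>p\<in>{m1<..m}. fst (ys j) p / \<tau> j) + (\<Sum>p\<in>{1..m}. norm (W j p /\<^sub>R \<tau> j)) = 1" for j
  proof -
    have "(\<Sum>p\<in>{1..m}. norm (W j p /\<^sub>R \<tau> j)) = (\<Sum>p\<in>{1..m}. norm (W j p)) / \<tau> j"
      by (simp only: norm_W_scaled sum_divide_distrib)
    moreover have "(\<Sum>p\<in>{m1<..m}. fst (ys j) p / \<tau> j) = constr_mass (ys j) / \<tau> j"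
      by (simp add: constr_mass_def sum_divide_distrib)
    ultimately show ?thesis
      using scale_pos[of j] unfolding kkt_scale_def by (simp add: field_simps)
  qed
  moreover have "(\<lambda>j. 1 / \<tau> j + (\<Sum>p\<in>{m1<..m}. fst (ys j) p / \<tau> j) + (\<Sum>p\<in>{1..m}. norm (W j p /\<^sub>R \<tau> j)))
      \<longlonglongrightarrow> 0 + (\<Sum>p\<in>{m1<..m}. \<eta> p) + (\<Sum>p\<in>{1..m}. norm (\<omega> p))"
    by (intro tendsto_add inverse_scale_tendsto_zero tendsto_sum tendsto_norm \<eta>_lim \<omega>_lim) auto
  ultimately show ?thesis using LIMSEQ_unique[OF tendsto_const] by fastforce
qed

lemma I2_bounded:
  assumes "p \<in> I2 m m1 phi"
  shows "\<beta> p \<noteq> 0" and "\<beta>' p \<noteq> 0"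
proof -
  have pm: "p \<in> {1..m}" using assms I2_subset[of m m1 phi] m1_le by auto
  have dAinf: "dAinf g h p xbar = {0}" by (rule horizon_trivial[OF xbar_feasible assms])
  have no_horizon: False if "norm d = 1 \<and> (\<forall>c>0. c *\<^sub>R d \<in> dAinf g h p xbar)" for d
  proof -
    have "1 *\<^sub>R d \<in> dAinf g h p xbar" using spec[OF conjunct2[OF that], of 1] by simp
    then show False using dAinf that by simp
  qed
  show "\<beta> p \<noteq> 0"
    using no_horizon near_dcsub_limit(1)[OF ut_near[OF pm] \<alpha>_lim[OF pm] \<beta>_lim[OF pm]] by blast
  show "\<beta>' p \<noteq> 0"
    using no_horizon near_dcsub_limit(1)[OF vt_near[OF pm] \<alpha>'_lim[OF pm] \<beta>'_lim[OF pm]] by blast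
qed

lemma I2_\<omega>:
  assumes "p \<in> I2 m m1 phi"
  shows "\<omega> p = 0"
proof -
  have p: "p \<in> {1..m1}" and pm: "p \<in> {1..m}" using assms I2_subset[of m m1 phi] m1_le by auto
  have us: "(\<lambda>j. us j p) \<longlonglongrightarrow> \<alpha> p /\<^sub>R \<beta> p" and vs: "(\<lambda>j. vs j p) \<longlonglongrightarrow> \<alpha>' p /\<^sub>R \<beta>' p"
    using near_dcsub_limit(2)[OF ut_near[OF pm] \<alpha>_lim[OF pm] \<beta>_lim[OF pm]]
      near_dcsub_limit(2)[OF vt_near[OF pm] \<alpha>'_lim[OF pm] \<beta>'_lim[OF pm]] I2_bounded[OF assms] by blast+
  obtain R1 where "\<And>j. norm (us j p) \<le> R1" using tendsto_imp_norm_bounded[OF us] by blast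
  moreover obtain R2 where "\<And>j. norm (vs j p) \<le> R2" using tendsto_imp_norm_bounded[OF vs] by blast
  ultimately have R: "\<And>j. norm (us j p) \<le> max R1 R2" "\<And>j. norm (vs j p) \<le> max R1 R2"
    by (meson max.coboundedI1 max.coboundedI2)+
  define R where "R = max R1 R2"
  obtain M where "eventually (\<lambda>j. \<forall>p\<in>{1..m1}. \<bar>fst (ys j) p\<bar> + \<bar>snd (ys j) p\<bar> \<le> M) sequentially"
    using objective_multipliers_bounded by blast
  then have "eventually (\<lambda>j. norm (W j p) \<le> M * R) sequentially"
  proof eventually_elim
    case (elim j)
    have "0 \<le> R" unfolding R_def using R(1)[of j] norm_ge_zero order_trans by blast
    have "norm (W j p) \<le> (\<bar>fst (ys j) p\<bar> + \<bar>snd (ys j) p\<bar>) * R"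
      using R unfolding R_def by (intro norm_kkt_term_le)
    also have "\<dots> \<le> M * R" using elim p \<open>0 \<le> R\<close> by (intro mult_right_mono) auto
    finally show ?case .
  qed
  from tendsto_zero_scaleR_bounded[OF inverse_scale_tendsto_zero this]
  have "(\<lambda>j. W j p /\<^sub>R \<tau> j) \<longlonglongrightarrow> 0" by (simp add: divide_inverse_commute)
  then show ?thesis using LIMSEQ_unique[OF \<omega>_lim[OF pm]] by simp
qed

lemma limit_when_bounded:
  assumes pm: "p \<in> {1..m}" and "\<beta> p \<noteq> 0"
  shows "\<omega> p = \<eta> p *\<^sub>R (\<alpha> p /\<^sub>R \<beta> p)"
proof (cases "p \<in> I2 m m1 phi")
  case True
  then have "p \<in> {1..m1}" using I2_subset[of m m1 phi] by auto
  then show ?thesis using I2_\<omega>[OF True] \<eta>_objective by simp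
next
  case False
  have "W j p /\<^sub>R \<tau> j = (fst (ys j) p / \<tau> j) *\<^sub>R us j p" for j
    using Y_monotone_part(2)[OF ys_Y pm False] by (simp add: kkt_term_def divide_inverse_commute)
  moreover have "(\<lambda>j. (fst (ys j) p / \<tau> j) *\<^sub>R us j p) \<longlonglongrightarrow> \<eta> p *\<^sub>R (\<alpha> p /\<^sub>R \<beta> p)"
    using near_dcsub_limit(2)[OF ut_near[OF pm] \<alpha>_lim[OF pm] \<beta>_lim[OF pm] assms(2)]
    by (intro tendsto_scaleR \<eta>_lim[OF pm]) blast
  ultimately show ?thesis using LIMSEQ_unique[OF \<omega>_lim[OF pm]] by simp
qed

lemma limit_when_horizon:
  assumes pm: "p \<in> {1..m}" and "\<beta> p = 0"
  shows "\<eta> p = 0" and "\<omega> p = norm (\<omega> p) *\<^sub>R \<alpha> p"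
proof -
  have notI2: "p \<notin> I2 m m1 phi" using I2_bounded(1) assms(2) by blast
  have del: "del (\<kappa> j) \<le> del 0" for j using del_mono by (simp add: antimonoD)
  have fst_nonneg: "0 \<le> fst (ys j) p / \<tau> j" for j
    using Y_monotone_part(1)[OF ys_Y pm notI2] scale_pos by (simp add: divide_nonneg_pos)
  have W: "W j p /\<^sub>R \<tau> j = (fst (ys j) p / \<tau> j) *\<^sub>R us j p" for j
    using Y_monotone_part(2)[OF ys_Y pm notI2] by (simp add: kkt_term_def divide_inverse_commute)
  have qU: "(fst (ys j) p / \<tau> j) * norm (us j p) \<le> 1" for j
  proof -
    have "(fst (ys j) p / \<tau> j) * norm (us j p) = norm ((fst (ys j) p / \<tau> j) *\<^sub>R us j p)"
      by (simp only: norm_scaleR abs_of_nonneg[OF fst_nonneg[of j]])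
    also have "\<dots> = norm (W j p /\<^sub>R \<tau> j)" by (simp only: W)
    also have "\<dots> \<le> 1"
      unfolding norm_W_scaled using kkt_scale_ge(3)[OF ys_Y pm, of j "us j" "vs j"] scale_pos[of j]
      by (simp add: divide_le_eq_1)
    finally show ?thesis .
  qed
  have near: "norm (ut j p - us j p) \<le> del 0" for j
    using ut_near[OF pm, of j] del[of j] by linarith
  have \<beta>0: "(\<lambda>j. inverse (1 + norm (ut j p))) \<longlonglongrightarrow> 0" using \<beta>_lim[OF pm] assms(2) by simp
  have "(\<lambda>j. (fst (ys j) p / \<tau> j) *\<^sub>R us j p) \<longlonglongrightarrow> \<omega> p" using \<omega>_lim[OF pm] by (simp only: W)
  from scaled_horizon_limit[OF fst_nonneg \<eta>_lim[OF pm] qU near \<alpha>_lim[OF pm] \<beta>0 this]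
  show "\<eta> p = 0" and "\<omega> p = norm (\<omega> p) *\<^sub>R \<alpha> p" by blast+
qed

lemma qualification_pair:
  assumes pm: "p \<in> {1..m}"
  shows "\<exists>y v. y *\<^sub>R v = \<omega> p \<and> (y = 0 \<longrightarrow> \<omega> p = 0 \<and> \<eta> p = 0) \<and>
    ((y \<in> (\<Union>t\<in>Tset (dcf g h) p xbar. ncone1 {s. Phi m1 phi p s \<noteq> \<infinity>} t) \<and> v \<in> convex hull (dA g h p xbar))
     \<or> v \<in> dAinf g h p xbar - {0})"
proof (cases "\<beta> p = 0")
  case False
  have "\<alpha> p /\<^sub>R \<beta> p \<in> dA g h p xbar"
    using near_dcsub_limit(2)[OF ut_near[OF pm] \<alpha>_lim[OF pm] \<beta>_lim[OF pm] False] by blast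
  then have "\<alpha> p /\<^sub>R \<beta> p \<in> convex hull (dA g h p xbar)" by (rule hull_inc)
  moreover have "\<eta> p \<in> (\<Union>t\<in>Tset (dcf g h) p xbar. ncone1 {s. Phi m1 phi p s \<noteq> \<infinity>} t)"
    by (rule UN_I[where B = "ncone1 {s. Phi m1 phi p s \<noteq> \<infinity>}", OF tt_in_Tset[OF pm] \<eta>_ncone[OF pm]])
  ultimately show ?thesis
    using limit_when_bounded[OF pm False] by (intro exI[of _ "\<eta> p"] exI[of _ "\<alpha> p /\<^sub>R \<beta> p"]) simp
next
  case True
  have unit: "norm (\<alpha> p) = 1" and horizon: "\<And>c. 0 < c \<Longrightarrow> c *\<^sub>R \<alpha> p \<in> dAinf g h p xbar"
    using near_dcsub_limit(1)[OF ut_near[OF pm] \<alpha>_lim[OF pm] \<beta>_lim[OF pm] True] by blast+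
  note lim = limit_when_horizon[OF pm True]
  show ?thesis
  proof (cases "\<omega> p = 0")
    case True
    then show ?thesis using unit horizon[of 1] lim by (intro exI[of _ 0] exI[of _ "\<alpha> p"]) auto
  next
    case False
    then have "\<omega> p \<in> dAinf g h p xbar" using horizon[of "norm (\<omega> p)"] lim(2) by simp
    then show ?thesis using False by (intro exI[of _ 1] exI[of _ "\<omega> p"]) auto
  qed
qed

lemma limits_inconsistent: False
proof -
  define P where "P p y v \<longleftrightarrow> y *\<^sub>R v = \<omega> p \<and> (y = 0 \<longrightarrow> \<omega> p = 0 \<and> \<eta> p = 0) \<and>
    ((y \<in> (\<Union>t\<in>Tset (dcf g h) p xbar. ncone1 {s. Phi m1 phi p s \<noteq> \<infinity>} t) \<and> v \<in> convex hull (dA g h p xbar))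
     \<or> v \<in> dAinf g h p xbar - {0})" for p y v
  have "\<forall>p\<in>{1..m}. \<exists>y v. P p y v" unfolding P_def using qualification_pair by blast
  then obtain y where "\<forall>p\<in>{1..m}. \<exists>v. P p (y p) v" by (rule bchoice[THEN exE])
  then obtain v where yv: "\<forall>p\<in>{1..m}. P p (y p) (v p)" by (rule bchoice[THEN exE])
  have "\<forall>p\<in>{1..m}. y p = 0"
  proof (rule CQ[OF xbar_feasible])
    show "(\<Sum>p\<in>{1..m}. y p *\<^sub>R v p) = 0" using yv sum_\<omega>_eq_0 by (simp add: P_def)
  qed (use yv in \<open>auto simp: P_def\<close>)
  then have "\<omega> p = 0 \<and> \<eta> p = 0" if "p \<in> {1..m}" for p using yv that by (auto simp: P_def)
  then show False using normalization by simp
qed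

end

context adc_blowup
begin

lemma normalized_bounded:
  assumes pm: "p \<in> {1..m}"
  shows "bounded (range (\<lambda>j. (W j p /\<^sub>R \<tau> j, shrink (ut j p), inverse (1 + norm (ut j p)),
      shrink (vt j p), inverse (1 + norm (vt j p)), fst (ys j) p / \<tau> j, fv (\<kappa> j) p)))"
proof -
  have unit: "bounded (range (\<lambda>j. F j))" if "\<And>j. norm (F j) \<le> 1" for F :: "nat \<Rightarrow> 'b::real_normed_vector"
    using that by (auto simp: bounded_iff)
  have W: "norm (W j p /\<^sub>R \<tau> j) \<le> 1" for j
    unfolding norm_W_scaled using kkt_scale_ge(3)[OF ys_Y pm] scale_pos[of j] by (simp add: divide_le_eq_1)
  obtain M where M: "eventually (\<lambda>j. \<forall>p\<in>{1..m1}. \<bar>fst (ys j) p\<bar> + \<bar>snd (ys j) p\<bar> \<le> M) sequentially"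
    using objective_multipliers_bounded by blast
  then have "eventually (\<lambda>j. norm (fst (ys j) p / \<tau> j) \<le> max 1 M) sequentially"
  proof eventually_elim
    case (elim j)
    have \<tau>: "1 \<le> \<tau> j" by (rule kkt_scale_ge(1)[OF ys_Y])
    show ?case
    proof (cases "p \<le> m1")
      case True
      then have "\<bar>fst (ys j) p\<bar> + \<bar>snd (ys j) p\<bar> \<le> M" using elim pm by simp
      then have "\<bar>fst (ys j) p\<bar> \<le> M" using abs_ge_zero[of "snd (ys j) p"] by linarith
      moreover have "\<bar>fst (ys j) p\<bar> / \<tau> j \<le> \<bar>fst (ys j) p\<bar>" using \<tau> by (simp add: divide_le_eq mult_le_cancel_left1)
      ultimately show ?thesis using \<tau> by (simp add: abs_of_pos)
    next
      case False
      then have "p \<in> {m1<..m}" using pm by simp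
      then have "0 \<le> fst (ys j) p" "fst (ys j) p \<le> \<tau> j"
        using Y_constraint_part(1)[OF ys_Y] kkt_scale_ge(4)[OF ys_Y] by blast+
      then have "0 \<le> fst (ys j) p / \<tau> j" "fst (ys j) p / \<tau> j \<le> 1" using \<tau> by (simp_all add: divide_le_eq_1)
      then show ?thesis by (simp only: real_norm_def abs_of_nonneg le_max_iff_disj simp_thms)
    qed
  qed
  moreover obtain c C where "eventually (\<lambda>j. c \<le> fv (\<kappa> j) p \<and> fv (\<kappa> j) p \<le> C) sequentially"
    using fv_bounded[OF pm] by blast
  then have "eventually (\<lambda>j. norm (fv (\<kappa> j) p) \<le> \<bar>c\<bar> + \<bar>C\<bar>) sequentially"
    by eventually_elim auto
  ultimately show ?thesis
    by (intro bounded_range_Pair unit W norm_shrink_le eventually_norm_le_imp_bounded_range)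
      (simp_all add: inverse_one_plus_norm)
qed

lemma subseq_blowup:
  assumes r: "strict_mono r"
  shows "adc_blowup m m1 phi f g h ahat ell eps del lam ctr sol a b (\<lambda>j. \<kappa> (r j)) xbar (\<lambda>j. ys (r j))"
proof (rule adc_blowup.intro[OF adc_outer_steps_axioms], unfold_locales)
  show "strict_mono (\<lambda>j. \<kappa> (r j))" using strict_mono_o[OF \<kappa> r] by (simp add: o_def)
  show "(\<lambda>j. ctr (\<kappa> (r j))) \<longlonglongrightarrow> xbar" using LIMSEQ_subseq_LIMSEQ[OF ctr_lim r] by (simp add: o_def)
  show "ys (r j) \<in> Y (\<kappa> (r j))" for j by (rule ys_Y)
  show "real j \<le> ynorm m (ys (r j))" for j
    using ys_large[of "r j"] seq_suble[OF r, of j] by linarith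
qed (fact horizon_trivial)

lemma blowup_inconsistent: False
proof -
  define Q where "Q j p = (W j p /\<^sub>R \<tau> j, shrink (ut j p), inverse (1 + norm (ut j p)),
      shrink (vt j p), inverse (1 + norm (vt j p)), fst (ys j) p / \<tau> j, fv (\<kappa> j) p)" for j p
  obtain r L where r: "strict_mono r" and L: "\<forall>p\<in>{1..m}. (\<lambda>j. Q (r j) p) \<longlonglongrightarrow> L p"
    using finite_common_convergent_subseq[of "{1..m}" Q] normalized_bounded unfolding Q_def by blast
  interpret sub: adc_blowup m m1 phi f g h ahat ell eps del lam ctr sol a b "\<lambda>j. \<kappa> (r j)" xbar "\<lambda>j. ys (r j)"
    by (rule subseq_blowup[OF r])
  interpret sub: adc_blowup_limits m m1 phi f g h ahat ell eps del lam ctr sol a b "\<lambda>j. \<kappa> (r j)" xbar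
      "\<lambda>j. ys (r j)" "\<lambda>p. fst (L p)" "\<lambda>p. fst (snd (L p))" "\<lambda>p. fst (snd (snd (snd (L p))))"
      "\<lambda>p. fst (snd (snd (L p)))" "\<lambda>p. fst (snd (snd (snd (snd (L p)))))"
      "\<lambda>p. fst (snd (snd (snd (snd (snd (L p))))))" "\<lambda>p. snd (snd (snd (snd (snd (snd (L p))))))"
  proof unfold_locales
    fix p assume "p \<in> {1..m}"
    then have lim: "(\<lambda>j. Q (r j) p) \<longlonglongrightarrow> L p" using L by blast
    note lims = tendsto_fst[OF lim] tendsto_fst[OF tendsto_snd[OF lim]]
      tendsto_fst[OF tendsto_snd[OF tendsto_snd[OF lim]]]
      tendsto_fst[OF tendsto_snd[OF tendsto_snd[OF tendsto_snd[OF lim]]]]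
      tendsto_fst[OF tendsto_snd[OF tendsto_snd[OF tendsto_snd[OF tendsto_snd[OF lim]]]]]
      tendsto_fst[OF tendsto_snd[OF tendsto_snd[OF tendsto_snd[OF tendsto_snd[OF tendsto_snd[OF lim]]]]]]
      tendsto_snd[OF tendsto_snd[OF tendsto_snd[OF tendsto_snd[OF tendsto_snd[OF tendsto_snd[OF lim]]]]]]
    show "(\<lambda>j. sub.W j p /\<^sub>R sub.\<tau> j) \<longlonglongrightarrow> fst (L p)"
      and "(\<lambda>j. shrink (sub.ut j p)) \<longlonglongrightarrow> fst (snd (L p))"
      and "(\<lambda>j. inverse (1 + norm (sub.ut j p))) \<longlonglongrightarrow> fst (snd (snd (L p)))"
      and "(\<lambda>j. shrink (sub.vt j p)) \<longlonglongrightarrow> fst (snd (snd (snd (L p))))"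
      and "(\<lambda>j. inverse (1 + norm (sub.vt j p))) \<longlonglongrightarrow> fst (snd (snd (snd (snd (L p)))))"
      and "(\<lambda>j. fst (ys (r j)) p / sub.\<tau> j) \<longlonglongrightarrow> fst (snd (snd (snd (snd (snd (L p))))))"
      and "(\<lambda>j. fv (\<kappa> (r j)) p) \<longlonglongrightarrow> snd (snd (snd (snd (snd (snd (L p))))))"
      using lims by (simp_all add: Q_def)
  qed
  show False by (rule sub.limits_inconsistent)
qed

end

context adc_outer_steps
begin

lemma no_divergent_multipliers:
  assumes "strict_mono \<kappa>" and "(\<lambda>j. ctr (\<kappa> j)) \<longlonglongrightarrow> xbar"
    and "\<And>j. ys j \<in> Y (\<kappa> j)" and "\<And>j. real j \<le> ynorm m (ys j)"
    and "\<And>p. xbar \<in> (\<Inter>p\<in>{1..m}. domF m1 phi f p) \<Longrightarrow> p \<in> I2 m m1 phi \<Longrightarrow> dAinf g h p xbar = {0}"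
  shows False
proof -
  interpret adc_blowup m m1 phi f g h ahat ell eps del lam ctr sol a b \<kappa> xbar ys
    using assms by unfold_locales
  show False by (rule blowup_inconsistent)
qed

lemma Y_bounded_along:
  assumes "conv_along N ctr xbar" and "\<And>p. p \<in> I2 m m1 phi \<Longrightarrow> dAinf g h p xbar = {0}"
  shows "\<exists>B. \<forall>k\<in>N. \<forall>y\<in>Y k. ynorm m y \<le> B"
proof (rule ccontr)
  assume "\<not> ?thesis"
  then obtain \<kappa> ys where \<kappa>: "strict_mono \<kappa>" "\<And>j. \<kappa> j \<in> N"
    and ys: "\<And>j. ys j \<in> Y (\<kappa> j)" "\<And>j. real j \<le> ynorm m (ys j)"
    by (rule unbounded_family_obtain_seq[OF Y_bounded_at]) blast
  show False
    by (rule no_divergent_multipliers[OF \<kappa>(1) conv_along_imp_LIMSEQ_subseq[OF assms(1) \<kappa>] ys assms(2)])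
qed

lemma Y_bounded:
  assumes "bounded (range ctr)"
    and "\<And>z p. z \<in> (\<Inter>p\<in>{1..m}. domF m1 phi f p) \<Longrightarrow> p \<in> I2 m m1 phi \<Longrightarrow> dAinf g h p z = {0}"
  shows "\<exists>B. \<forall>k. \<forall>y\<in>Y k. ynorm m y \<le> B"
proof (rule ccontr)
  assume "\<not> ?thesis"
  then have "\<not> (\<exists>B. \<forall>k\<in>UNIV. \<forall>y\<in>Y k. ynorm m y \<le> B)" by simp
  then obtain \<kappa> ys where \<kappa>: "strict_mono \<kappa>"
    and ys: "\<And>j. ys j \<in> Y (\<kappa> j)" "\<And>j. real j \<le> ynorm m (ys j)"
    by (rule unbounded_family_obtain_seq[OF Y_bounded_at]) blast
  have "range (\<lambda>j. ctr (\<kappa> j)) \<subseteq> range ctr" by auto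
  then have "bounded (range (\<lambda>j. ctr (\<kappa> j)))" using bounded_subset[OF assms(1)] by blast
  then obtain xbar r where r: "strict_mono r" "((\<lambda>j. ctr (\<kappa> j)) \<circ> r) \<longlonglongrightarrow> xbar"
    using bounded_imp_convergent_subsequence by blast
  show False
  proof (rule no_divergent_multipliers)
    show "strict_mono (\<lambda>j. \<kappa> (r j))" using strict_mono_o[OF \<kappa> r(1)] by (simp add: o_def)
    show "(\<lambda>j. ctr (\<kappa> (r j))) \<longlonglongrightarrow> xbar" using r(2) by (simp add: o_def)
    show "ys (r j) \<in> Y (\<kappa> (r j))" for j by (rule ys(1))
    show "real j \<le> ynorm m (ys (r j))" for j using ys(2)[of "r j"] seq_suble[OF r(1), of j] by linarith
  qed (rule assms(2))
qed

end

theorem proposition4p5: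
  fixes m m1 :: nat
    and phi :: "nat \<Rightarrow> real \<Rightarrow> real"
    and f :: "nat \<Rightarrow> 'a::euclidean_space \<Rightarrow> real"
    and g h :: "nat \<Rightarrow> nat \<Rightarrow> 'a \<Rightarrow> real"
    and ahat :: "nat \<Rightarrow> nat \<Rightarrow> real"
    and ell eps del :: "nat \<Rightarrow> real"
    and lam :: real
    and x :: "nat \<Rightarrow> 'a"
    and xx :: "nat \<Rightarrow> nat \<Rightarrow> 'a"
    and a b :: "nat \<Rightarrow> nat \<Rightarrow> nat \<Rightarrow> 'a"
    and ik :: "nat \<Rightarrow> nat"
  assumes m1_le: "m1 \<le> m"
    and phi_convex: "\<forall>p\<in>{1..m1}. convex_on UNIV (phi p)"
    \<comment> \<open>Assumption 1\<close>
    and g_convex: "\<forall>k. \<forall>p\<in>{1..m}. convex_on UNIV (g k p)"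
    and h_convex: "\<forall>k. \<forall>p\<in>{1..m}. convex_on UNIV (h k p)"
    and f_epi: "\<forall>p\<in>{1..m}. epi_conv (\<lambda>k z. ereal (dcf g h k p z)) (\<lambda>z. ereal (f p z))"
    and f_liminf: "\<forall>p\<in>{1..m}. \<forall>z.
        - \<infinity> < Liminf (nhds z \<times>\<^sub>F sequentially) (\<lambda>(z', k). ereal (dcf g h k p z'))"
    and f_limsup: "\<forall>p\<in>{1..m}. \<forall>z.
        Limsup (nhds z \<times>\<^sub>F sequentially) (\<lambda>(z', k). ereal (dcf g h k p z')) < \<infinity>"
    and F_epi: "\<forall>p\<in>{1..m}. epi_conv (\<lambda>k z. Phi m1 phi p (dcf g h k p z))
                                     (\<lambda>z. Phi m1 phi p (f p z))"
    \<comment> \<open>Assumption 2\<close>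
    and ahat_nonneg: "\<forall>k. \<forall>p\<in>{1..m}. 0 \<le> ahat k p"
    and ahat_ge: "\<forall>k. \<forall>p\<in>{m1<..m}.
        (SUP z\<in>{z. \<forall>q\<in>{m1<..m}. dcf g h k q z \<le> 0}.
            ereal (max 0 (dcf g h (Suc k) p z - dcf g h k p z))) \<le> ereal (ahat k p)"
    and ahat_summable: "\<forall>p\<in>{m1<..m}. summable (\<lambda>k. ahat k p)"
    and x0_feas: "\<forall>p\<in>{m1<..m}. dcf g h 0 p (x 0) \<le> - (\<Sum>k. ahat k p)"
    and ahat_zero: "\<forall>k. \<forall>p\<in>{1..m1}. ahat k p = 0"
    \<comment> \<open>Assumption 3\<close>
    and ell_pos: "\<forall>k. 0 < ell k"
    and lipschitz_sub: "\<forall>k. \<forall>p\<in>{1..m}. \<forall>z z'.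
        min (hausd (csubdiff (g k p) z) (csubdiff (g k p) z'))
            (hausd (csubdiff (h k p) z) (csubdiff (h k p) z')) \<le> ereal (ell k * norm (z - z'))"
    \<comment> \<open>Assumption 4\<close>
    and level_bounded: "\<forall>k. \<forall>c::real.
        bounded {z. (\<Sum>p\<in>{1..m}. Phi m1 phi p (dcf g h k p z)) \<le> ereal c}"
    \<comment> \<open>Assumption 5\<close>
    and CQ: "\<forall>xb\<in>(\<Inter>p\<in>{1..m}. domF m1 phi f p). \<forall>(y::nat \<Rightarrow> real) (v::nat \<Rightarrow> 'a).
        (\<Sum>p\<in>{1..m}. y p *\<^sub>R v p) = 0 \<and>
        (\<forall>p\<in>{1..m}.
           (y p \<in> (\<Union>t\<in>Tset (dcf g h) p xb. ncone1 {s. Phi m1 phi p s \<noteq> \<infinity>} t) \<and>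
            v p \<in> convex hull (dA g h p xb))
         \<or> v p \<in> dAinf g h p xb - {0})
        \<longrightarrow> (\<forall>p\<in>{1..m}. y p = 0)"
    \<comment> \<open>Method parameters\<close>
    and lam_pos: "0 < lam"
    and eps_pos: "\<forall>k. 0 < eps k" and eps_mono: "antimono eps" and eps_lim: "eps \<longlonglongrightarrow> 0"
    and del_pos: "\<forall>k. 0 < del k" and del_mono: "antimono del" and del_lim: "del \<longlonglongrightarrow> 0"
    and delell_mono: "antimono (\<lambda>k. del k / (lam + ell k))"
    and delell_lim: "(\<lambda>k. del k / (lam + ell k)) \<longlonglongrightarrow> 0"
    \<comment> \<open>The iterates are generated by the method\<close>
    and inner_start: "\<forall>k. xx k 0 = x k"
    and sub_choice: "\<forall>k. \<forall>i\<le>ik k. \<forall>p\<in>{1..m}.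
        a k i p \<in> csubdiff (h k p) (xx k i) \<and> b k i p \<in> csubdiff (g k p) (xx k i)"
    and inner_step: "\<forall>k. \<forall>i\<le>ik k.
        subsol m m1 phi g h ahat lam k (a k i) (b k i) (xx k i) (xx k (Suc i))"
    and stop_at: "\<forall>k. stoptest m m1 phi g h ahat lam eps del ell k (a k (ik k)) (b k (ik k))
                        (xx k (ik k)) (xx k (Suc (ik k)))"
    and stop_first: "\<forall>k. \<forall>i<ik k. \<not> stoptest m m1 phi g h ahat lam eps del ell k (a k i) (b k i)
                        (xx k i) (xx k (Suc i))"
    and outer_step: "\<forall>k. x (Suc k) = xx k (ik k)"
    \<comment> \<open>Assumption 6\<close>
    and CQ_sub: "\<forall>k z' z'' (a' :: nat \<Rightarrow> 'a) (b' :: nat \<Rightarrow> 'a).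
        (\<forall>p\<in>{1..m}. a' p \<in> csubdiff (h k p) z' \<and> b' p \<in> csubdiff (g k p) z') \<and>
        subsol m m1 phi g h ahat lam k a' b' z' z'' \<longrightarrow>
        (\<forall>y::nat \<Rightarrow> real.
           (\<forall>p\<in>{m1<..m}. y p \<in> ncone1 {..0} (fup g h ahat a' k p z' z'')) \<and>
           (\<exists>v::nat \<Rightarrow> 'a. (\<forall>p\<in>{m1<..m}. v p \<in> csubdiff (fup g h ahat a' k p z') z'') \<and>
               (\<Sum>p\<in>{m1<..m}. y p *\<^sub>R v p) = 0)
           \<longrightarrow> (\<forall>p\<in>{m1<..m}. y p = 0))"
  shows
    "(\<forall>N xbar. infinite N \<and> conv_along N (\<lambda>k. x (Suc k)) xbar \<and>
        (\<forall>p\<in>I2 m m1 phi. dAinf g h p xbar = {0}) \<longrightarrow>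
        (\<exists>B. \<forall>k\<in>N. \<forall>y\<in>Yset m m1 phi lam
              (\<lambda>p. fup g h ahat (a k (ik k)) k p (xx k (ik k)))
              (\<lambda>p. flo g h (b k (ik k)) k p (xx k (ik k)))
              (xx k (Suc (ik k))) (xx k (ik k)). ynorm m y \<le> B))
     \<and>
     (bounded (range x) \<and>
        (\<forall>z\<in>(\<Inter>p\<in>{1..m}. domF m1 phi f p). \<forall>p\<in>I2 m m1 phi. dAinf g h p z = {0}) \<longrightarrow>
        (\<exists>B. \<forall>k. \<forall>y\<in>Yset m m1 phi lam
              (\<lambda>p. fup g h ahat (a k (ik k)) k p (xx k (ik k)))
              (\<lambda>p. flo g h (b k (ik k)) k p (xx k (ik k)))
              (xx k (Suc (ik k))) (xx k (ik k)). ynorm m y \<le> B))"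
proof -
  interpret S: adc_outer_steps m m1 phi f g h ahat ell eps del lam "\<lambda>k. xx k (ik k)"
      "\<lambda>k. xx k (Suc (ik k))" "\<lambda>k. a k (ik k)" "\<lambda>k. b k (ik k)"
  proof unfold_locales
    fix z y v
    assume z: "z \<in> (\<Inter>p\<in>{1..m}. domF m1 phi f p)" and sum: "(\<Sum>p\<in>{1..m}. y p *\<^sub>R v p) = 0"
      and pairs: "\<And>p. p \<in> {1..m} \<Longrightarrow> (y p \<in> (\<Union>t\<in>Tset (dcf g h) p z. ncone1 {s. Phi m1 phi p s \<noteq> \<infinity>} t) \<and>
         v p \<in> convex hull (dA g h p z)) \<or> v p \<in> dAinf g h p z - {0}"
    have "(\<Sum>p\<in>{1..m}. y p *\<^sub>R v p) = 0 \<and> (\<forall>p\<in>{1..m}.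
        (y p \<in> (\<Union>t\<in>Tset (dcf g h) p z. ncone1 {s. Phi m1 phi p s \<noteq> \<infinity>} t) \<and>
         v p \<in> convex hull (dA g h p z)) \<or> v p \<in> dAinf g h p z - {0})"
      by (intro conjI ballI sum pairs)
    then show "\<forall>p\<in>{1..m}. y p = 0" using CQ[rule_format, OF z] by blast
  next
    fix k y v
    assume yv: "\<And>p. p \<in> {m1<..m} \<Longrightarrow>
        y p \<in> ncone1 {..0} (fup g h ahat (a k (ik k)) k p (xx k (ik k)) (xx k (Suc (ik k)))) \<and>
        v p \<in> csubdiff (fup g h ahat (a k (ik k)) k p (xx k (ik k))) (xx k (Suc (ik k)))"
      and sum: "(\<Sum>p\<in>{m1<..m}. y p *\<^sub>R v p) = 0"
    have "(\<forall>p\<in>{1..m}. a k (ik k) p \<in> csubdiff (h k p) (xx k (ik k)) \<and>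
        b k (ik k) p \<in> csubdiff (g k p) (xx k (ik k))) \<and>
        subsol m m1 phi g h ahat lam k (a k (ik k)) (b k (ik k)) (xx k (ik k)) (xx k (Suc (ik k)))"
      using sub_choice inner_step by blast
    moreover have "(\<forall>p\<in>{m1<..m}. y p \<in> ncone1 {..0} (fup g h ahat (a k (ik k)) k p (xx k (ik k)) (xx k (Suc (ik k))))) \<and>
        (\<exists>v. (\<forall>p\<in>{m1<..m}. v p \<in> csubdiff (fup g h ahat (a k (ik k)) k p (xx k (ik k))) (xx k (Suc (ik k)))) \<and>
          (\<Sum>p\<in>{m1<..m}. y p *\<^sub>R v p) = 0)"
      using yv sum by blast
    ultimately show "\<forall>p\<in>{m1<..m}. y p = 0" using CQ_sub[rule_format] by blast
  next
    fix p and z :: 'a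
    assume "p \<in> {1..m}"
    then show "- \<infinity> < Liminf (nhds z \<times>\<^sub>F sequentially) (\<lambda>(z', k). ereal (dcf g h k p z'))"
      and "Limsup (nhds z \<times>\<^sub>F sequentially) (\<lambda>(z', k). ereal (dcf g h k p z')) < \<infinity>"
      using f_liminf f_limsup by blast+
  qed (simp_all add: m1_le phi_convex g_convex h_convex f_epi ahat_nonneg ahat_summable
      ahat_zero ell_pos lipschitz_sub lam_pos eps_mono eps_lim del_pos del_mono del_lim delell_lim
      sub_choice inner_step stop_at)
  have ctr: "(\<lambda>k. xx k (ik k)) = (\<lambda>k. x (Suc k))" using outer_step by simp
  show ?thesis
  proof (intro conjI allI impI, goal_cases)
    case (1 N xbar)
    then show ?case by (intro S.Y_bounded_along[where xbar = xbar]) (simp_all add: ctr)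
  next
    case 2
    then have "bounded (range (\<lambda>k. xx k (ik k)))"
      unfolding ctr using bounded_subset[of "range x" "range (\<lambda>k. x (Suc k))"] by auto
    with 2 show ?case by (intro S.Y_bounded) auto
  qed
qed

end
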